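(* Let $q\ge4$. Assume (h), (R-q) with this $q$, ($\pi$-F) with some $p>2q$ and ($\pi$-T) with $p=2q$. Then $\sup_{h\in(0,h_0]}\sup_{t\in\pi_h}|\bar Y_t|^q\in L^1$, where $\bar Y=\bar Y(h)$ is the discrete approximation for stepsize $h$.
   Context: Let $(\Omega,\mathcal F,(\mathcal F_t)_{t\ge0},\mathbb P)$ be a filtered probability space whose filtration is generated by a $d$-dimensional Brownian motion $W$ and augmented by all $\mathbb P$-null sets; write $\mathbb E_t[\cdot]=\mathbb E[\cdot\mid\mathcal F_t]$. Let $\tau$ be a stopping time and let $L_f>0$ be a constant. For $h>0$ let $\pi_h=\{nh:n\in\mathbb N_0\}$. For each $h\in(0,h_0]$ there are given a finite $\pi_h$-valued stopping time $\tau_h$, an $\mathcal F_{\tau_h}$-measurable random variable $\bar\xi$ (depending on $h$), and a map $f_h:\pi_h\times\Omega\times\mathbb R\to\mathbb R$. The discrete approximation $(\bar Y_t)_{t\in\pi_h}$ is the solution of $\bar Y_t=1_{\{t\ge\tau_h\}}\bar\xi+1_{\{t<\tau_h\}}(\mathbb E_t[\bar Y_{t+h}]+hf_h(t,\bar Y_t))$, $t\in\pi_h$, given by $\bar Y_t=1_{\{t\ge\tau_h\}}\bar\xi+1_{\{t<\tau_h\}}\bar Y^*_t$, where $\bar Y^*$ is the unique fixed point of $T(R)_t=1_{\{t<\tau_h\}}\mathbb E_t[R_{t+h}]+1_{\{t<\tau_h\}}hf_h(t,R_t)+1_{\{t=\tau_h\}}\bar\xi$ in the Banach space of adapted sequences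 $(R_t)_{t\in\pi_h}$ with $R_t\in L^2(\mathcal F_t)$, $1_{\{t>\tau_h\}}R_t=0$ and $\sum_{t\in\pi_h}(1-3L_fh)^{-t/h}\|1_{\{t\le\tau_h\}}R_t\|_{L^2}<\infty$. Assumptions: (h) $h_0<\min\{L_f,\frac1{12L_f}\}$ and $h\in(0,h_0]$. (R-q) for a parameter $q\ge2$: there is $\rho>4qL_f$ with $\exp(\rho\tau)\in L^1$ and $\sup_{h\in(0,h_0]}\exp(\rho\tau_h)\in L^1$. ($\pi$-F) for a parameter $p$: each $f_h$ is Lipschitz in its last variable with the constant $L_f$, $f_h(t,A)$ is $\mathcal F_t$-measurable for every $\mathcal F_t$-measurable $A$, and $\mathbb E[\sup_{h\in(0,h_0]}\sup_{t\in\pi_h\cap[0,\tau\vee\tau_h]}|f_h(t,0)|^p]<\infty$. ($\pi$-T) for a parameter $p$: $\bar\xi$ is $\mathcal F_{\tau_h}$-measurable and $\mathbb E[\sup_{h\in(0,h_0]}|\bar\xi|^p]<\infty$. *)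

theory Defs
  imports "HOL-Probability.Probability"
begin

text \<open>Standard d-dimensional Brownian motion on the probability space M
  (the dimension d is the cardinality of the finite index type 'd).\<close>
definition brownian_motion :: "'a measure \<Rightarrow> (real \<Rightarrow> 'a \<Rightarrow> real ^ ('d::finite)) \<Rightarrow> bool" where
  "brownian_motion M W \<longleftrightarrow>
     (\<forall>t\<ge>0. W t \<in> borel_measurable M) \<and>
     (\<forall>\<omega>\<in>space M. W 0 \<omega> = 0) \<and>
     (\<forall>\<omega>\<in>space M. continuous_on {0..} (\<lambda>t. W t \<omega>)) \<and>
     (\<forall>s t. 0 \<le> s \<and> s < t \<longrightarrow>
        distributed M lborel (\<lambda>\<omega>. W t \<omega> - W s \<omega>)
          (\<lambda>x. ennreal (\<Prod>i\<in>UNIV. normal_density 0 (sqrt (t - s)) (x $ i)))) \<and>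
     (\<forall>(n::nat) (u::nat \<Rightarrow> real). u 0 \<ge> 0 \<and> (\<forall>k<n. u k < u (Suc k)) \<longrightarrow>
        prob_space.indep_vars M (\<lambda>_. borel) (\<lambda>k \<omega>. W (u (Suc k)) \<omega> - W (u k) \<omega>) {..<n})"

definition bm_filtration :: "'a measure \<Rightarrow> (real \<Rightarrow> 'a \<Rightarrow> real ^ ('d::finite)) \<Rightarrow> real \<Rightarrow> 'a measure" where
  "bm_filtration M W t = sigma (space M)
     ({W s -` A \<inter> space M | s A. 0 \<le> s \<and> s \<le> t \<and> A \<in> sets borel} \<union> null_sets M)"

definition grid :: "real \<Rightarrow> real set" where
  "grid h = {real n * h | n. True}"

text \<open>Ys is (a representative of) the unique fixed point of the map T in the
  weighted Banach space of adapted L^2 sequences described in the paper.\<close>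
definition disc_fixpoint ::
  "'a measure \<Rightarrow> (real \<Rightarrow> 'a measure) \<Rightarrow> real \<Rightarrow> real \<Rightarrow> ('a \<Rightarrow> real) \<Rightarrow> ('a \<Rightarrow> real)
    \<Rightarrow> (real \<Rightarrow> 'a \<Rightarrow> real \<Rightarrow> real) \<Rightarrow> (real \<Rightarrow> 'a \<Rightarrow> real) \<Rightarrow> bool" where
  "disc_fixpoint M F Lf h tauh xi f Ys \<longleftrightarrow>
     (\<forall>t\<in>grid h. Ys t \<in> borel_measurable (F t) \<and> integrable M (\<lambda>\<omega>. (Ys t \<omega>)\<^sup>2)) \<and>
     (\<forall>t\<in>grid h. AE \<omega> in M. t > tauh \<omega> \<longrightarrow> Ys t \<omega> = 0) \<and>
     summable (\<lambda>n::nat. (1 - 3 * Lf * h) powr (- real n) *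
        sqrt (\<integral>\<omega>. (indicator {\<omega>. real n * h \<le> tauh \<omega>} \<omega> * Ys (real n * h) \<omega>)\<^sup>2 \<partial>M)) \<and>
     (\<forall>t\<in>grid h. AE \<omega> in M. Ys t \<omega> =
        indicator {\<omega>. t < tauh \<omega>} \<omega> * real_cond_exp M (F t) (Ys (t + h)) \<omega>
        + indicator {\<omega>. t < tauh \<omega>} \<omega> * h * f t \<omega> (Ys t \<omega>)
        + indicator {\<omega>. t = tauh \<omega>} \<omega> * xi \<omega>)"

definition disc_approx :: "('a \<Rightarrow> real) \<Rightarrow> ('a \<Rightarrow> real) \<Rightarrow> (real \<Rightarrow> 'a \<Rightarrow> real) \<Rightarrow> real \<Rightarrow> 'a \<Rightarrow> real" where
  "disc_approx tauh xi Ys t \<omega> =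
     indicator {\<omega>. t \<ge> tauh \<omega>} \<omega> * xi \<omega> + indicator {\<omega>. t < tauh \<omega>} \<omega> * Ys t \<omega>"

end

theory Submission
  imports Defs
begin

text \<open>For a fixed step size \<open>h\<close>, the fixed-point equation and the Lipschitz bound give, before
  \<open>tau_h\<close>, the one-step inequality \<open>|Y t| \<le> (E[|Y (t + h)| | F t] + h |f(t, 0)|) / (1 - Lf h)\<close>.
  Iterating it, and letting the remainder vanish by the weighted summability that defines the
  fixed point, yields \<open>|Y t| \<le> E[G | F t]\<close> with \<open>G = exp (7/6 Lf tau_h) (tau_h sup |f(., 0)| + |xi|)\<close>.
  Absorbing \<open>tau_h\<close> into the exponential and using Young's inequality, all these \<open>G\<close> are
  dominated by one random variable in \<open>L^s\<close> with \<open>s > q\<close>; this is where \<open>\<rho> > 4 q Lf\<close> and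
  \<open>p > 2 q\<close> enter. Finally \<open>E[G | F t]^q \<le> E[G^s | F t]^(q/s)\<close> by Jensen's inequality, and since
  \<open>q / s < 1\<close>, Doob's weak maximal inequality and a dyadic layer-cake sum show that these
  conditional expectations are dominated in \<open>L^1\<close> uniformly in \<open>t\<close>; an essential union reduces the
  uncountably many times to countably many.\<close>

lemma powr_add_le_two_powr:
  fixes x y s :: real
  assumes "0 \<le> x" "0 \<le> y" "0 \<le> s"
  shows "(x + y) powr s \<le> 2 powr s * (x powr s + y powr s)"
proof -
  have "(x + y) powr s \<le> (2 * max x y) powr s"
    using assms by (intro powr_mono2) auto
  also have "\<dots> = 2 powr s * max x y powr s"
    using assms by (simp add: powr_mult)
  also have "\<dots> \<le> 2 powr s * (x powr s + y powr s)"
    by (intro mult_left_mono) (auto simp: max_def)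
  finally show ?thesis .
qed

lemma powr_mult_powr_le_add:
  fixes x y a b :: real
  assumes "0 \<le> x" "0 \<le> y" "0 \<le> a" "0 \<le> b" "a + b \<le> 1"
  shows "x powr a * y powr b \<le> x + y + 1"
proof -
  define w where "w = max (max x y) 1"
  have "x powr a * y powr b \<le> w powr a * w powr b"
    using assms by (intro mult_mono powr_mono2) (auto simp: w_def)
  also have "\<dots> = w powr (a + b)"
    by (simp add: powr_add)
  also have "\<dots> \<le> w powr 1"
    using assms by (intro powr_mono) (auto simp: w_def)
  also have "\<dots> \<le> x + y + 1"
    using assms by (auto simp: w_def)
  finally show ?thesis .
qed

lemma powr_le_one_plus:
  fixes z e :: real
  assumes "0 \<le> z" "0 \<le> e" "e \<le> 1"
  shows "z powr e \<le> 1 + z"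
proof (cases "z \<le> 1")
  case True
  then show ?thesis using assms powr_le1[of e z] by linarith
next
  case False
  then show ?thesis using assms powr_mono[of e 1 z] by simp
qed

lemma le_powr_inverse:
  fixes x p z :: real
  assumes "0 \<le> x" "0 < p" "x powr p \<le> z"
  shows "x \<le> z powr (1 / p)"
proof -
  have "x = (x powr p) powr (1 / p)"
    using assms by (simp add: powr_powr)
  also have "\<dots> \<le> z powr (1 / p)"
    using assms by (intro powr_mono2) auto
  finally show ?thesis .
qed

lemma inverse_one_minus_le_exp:
  fixes a :: real
  assumes "0 \<le> a" "a \<le> 1/12"
  shows "1 / (1 - a) \<le> exp (7/6 * a)"
proof -
  have "2 * a\<^sup>2 \<le> a / 6"
    using assms mult_right_mono[of a "1/12" a] by (simp add: power2_eq_square)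
  then have "- (7/6 * a) \<le> ln (1 - a)"
    using ln_one_minus_pos_lower_bound[of a] assms by linarith
  then have "exp (- (7/6 * a)) \<le> 1 - a"
    using assms by (subst (asm) ln_ge_iff) auto
  then show ?thesis
    using assms by (simp add: exp_minus field_simps)
qed

text \<open>The factor \<open>T \<le> 3 / Lf * exp (Lf T / 3)\<close> is absorbed into the exponential, raising the
  rate from \<open>7/6 Lf\<close> to \<open>3/2 Lf = (3 Lf / (2 \<rho>)) \<rho>\<close>.\<close>
lemma exp_weight_le_powr:
  fixes Lf \<rho> T R b d :: real
  assumes "0 < Lf" "0 < \<rho>" "0 \<le> T" "exp (\<rho> * T) \<le> R" "0 \<le> b" "0 \<le> d"
  shows "exp (7/6 * Lf * T) * (T * b + d) \<le> R powr (3 * Lf / (2 * \<rho>)) * (d + 3 / Lf * b)"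
proof -
  have T_le: "T \<le> 3 / Lf * exp (Lf * T / 3)"
    using exp_ge_add_one_self[of "Lf * T / 3"] assms by (simp add: field_simps)
  have d_le: "d \<le> exp (Lf * T / 3) * d"
    using assms by (simp add: mult_le_cancel_right1)
  have "exp (7/6 * Lf * T) * (T * b + d)
      \<le> exp (7/6 * Lf * T) * (3 / Lf * exp (Lf * T / 3) * b + exp (Lf * T / 3) * d)"
    using assms T_le d_le by (intro mult_left_mono add_mono mult_right_mono) auto
  also have "\<dots> = exp (\<rho> * T) powr (3 * Lf / (2 * \<rho>)) * (d + 3 / Lf * b)"
    using assms by (simp add: powr_def algebra_simps flip: exp_add)
  also have "\<dots> \<le> R powr (3 * Lf / (2 * \<rho>)) * (d + 3 / Lf * b)"
    using assms by (intro mult_right_mono powr_mono2) auto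
  finally show ?thesis .
qed

lemma sum_geometric_weights_le:
  fixes a :: "nat \<Rightarrow> real" and c b d :: real
  assumes "1 \<le> c" "0 \<le> b" "\<And>k. 0 \<le> a k" "\<And>k. k < N \<Longrightarrow> a k \<le> c * b" "a N \<le> d"
    and "\<And>k. N < k \<Longrightarrow> a k = 0"
  shows "(\<Sum>k<K. c ^ k * a k) \<le> c ^ N * (real N * b + d)"
proof -
  have "(\<Sum>k<K. c ^ k * a k) \<le> (\<Sum>k<K + Suc N. c ^ k * a k)"
    using assms by (intro sum_mono2) auto
  also have "\<dots> = (\<Sum>k<Suc N. c ^ k * a k)"
    using assms by (intro sum.mono_neutral_right) auto
  also have "\<dots> = (\<Sum>k<N. c ^ k * a k) + c ^ N * a N"
    by simp
  also have "(\<Sum>k<N. c ^ k * a k) \<le> (\<Sum>k<N. c ^ N * b)"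
  proof (intro sum_mono)
    fix k assume "k \<in> {..<N}"
    then have "c ^ k * a k \<le> c ^ Suc k * b"
      using assms mult_left_mono[of "a k" "c * b" "c ^ k"] by simp
    moreover have "c ^ Suc k \<le> c ^ N"
      using assms \<open>k \<in> {..<N}\<close> by (intro power_increasing) auto
    ultimately show "c ^ k * a k \<le> c ^ N * b"
      using assms by (meson mult_right_mono order.trans)
  qed
  also have "c ^ N * a N \<le> c ^ N * d"
    using assms by (intro mult_left_mono) auto
  finally show ?thesis
    by (simp add: algebra_simps)
qed

lemma (in finite_measure) countable_union_max_measure:
  assumes A: "\<And>i. i \<in> I \<Longrightarrow> A i \<in> sets M"
  shows "\<exists>J\<subseteq>I. countable J \<and>
    (\<forall>J'\<subseteq>I. countable J' \<longrightarrow> measure M (\<Union>j\<in>J'. A j) \<le> measure M (\<Union>j\<in>J. A j))"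
proof -
  define V where "V = {measure M (\<Union>j\<in>J. A j) | J. J \<subseteq> I \<and> countable J}"
  have V_ne: "V \<noteq> {}"
    unfolding V_def by blast
  have V_bdd: "bdd_above V"
    unfolding V_def by (rule bdd_aboveI[where M = "measure M (space M)"]) (auto intro: bounded_measure)
  have "\<exists>J. J \<subseteq> I \<and> countable J \<and> Sup V - inverse (Suc n) < measure M (\<Union>j\<in>J. A j)" for n :: nat
  proof -
    have "Sup V - inverse (Suc n) < Sup V"
      by simp
    from less_cSupD[OF V_ne this] show ?thesis
      unfolding V_def by auto
  qed
  then obtain Js where Js: "\<And>n. Js n \<subseteq> I" "\<And>n. countable (Js n)"
    "\<And>n. Sup V - inverse (Suc n) < measure M (\<Union>j\<in>Js n. A j)"
    by metis
  define J where "J = (\<Union>n. Js n)"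
  have J: "J \<subseteq> I" "countable J"
    using Js unfolding J_def by auto
  have "Sup V \<le> measure M (\<Union>j\<in>J. A j)"
  proof (rule field_le_epsilon)
    fix e :: real assume "0 < e"
    then obtain n where "inverse (Suc n) < e"
      using reals_Archimedean by blast
    moreover have "measure M (\<Union>j\<in>Js n. A j) \<le> measure M (\<Union>j\<in>J. A j)"
      using J A by (intro finite_measure_mono sets.countable_UN') (auto simp: J_def)
    ultimately show "Sup V \<le> measure M (\<Union>j\<in>J. A j) + e"
      using Js(3)[of n] by linarith
  qed
  moreover have "measure M (\<Union>j\<in>J'. A j) \<le> Sup V" if "J' \<subseteq> I" "countable J'" for J'
    using that by (intro cSup_upper V_bdd) (auto simp: V_def)
  ultimately show ?thesis
    using J by (meson order.trans)
qed

lemma (in finite_measure) countable_essential_cover: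
  assumes A: "\<And>i. i \<in> I \<Longrightarrow> A i \<in> sets M"
  shows "\<exists>J\<subseteq>I. countable J \<and> (\<forall>i\<in>I. A i - (\<Union>j\<in>J. A j) \<in> null_sets M)"
proof -
  obtain J where J: "J \<subseteq> I" "countable J"
    and max: "\<And>J'. J' \<subseteq> I \<Longrightarrow> countable J' \<Longrightarrow> measure M (\<Union>j\<in>J'. A j) \<le> measure M (\<Union>j\<in>J. A j)"
    using countable_union_max_measure[of I A, OF A] by blast
  have UN_J: "(\<Union>j\<in>J. A j) \<in> sets M"
    using J A by (intro sets.countable_UN') auto
  have "A i - (\<Union>j\<in>J. A j) \<in> null_sets M" if i: "i \<in> I" for i
  proof -
    have "insert i J \<subseteq> I" "countable (insert i J)"
      using J i by auto
    from max[OF this] have "measure M (\<Union>j\<in>insert i J. A j) \<le> measure M (\<Union>j\<in>J. A j)" .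
    moreover have "(\<Union>j\<in>insert i J. A j) = (\<Union>j\<in>J. A j) \<union> A i"
      by auto
    ultimately have "measure M ((\<Union>j\<in>J. A j) \<union> A i) \<le> measure M (\<Union>j\<in>J. A j)"
      by (simp only:)
    then have "measure M (A i - (\<Union>j\<in>J. A j)) = 0"
      using finite_measure_Union'[OF UN_J A[OF i]] measure_nonneg[of M "A i - (\<Union>j\<in>J. A j)"] by linarith
    then show ?thesis
      using A[OF i] UN_J by (simp add: emeasure_eq_measure null_sets_def)
  qed
  with J show ?thesis
    by (intro exI[of _ J]) simp
qed

lemma (in finite_measure) AE_countable_cover:
  fixes A :: "nat \<Rightarrow> 'i \<Rightarrow> 'a set"
  assumes A: "\<And>k i. i \<in> I \<Longrightarrow> A k i \<in> sets M"
  shows "\<exists>D\<subseteq>I. countable D \<and> (\<forall>k. \<forall>i\<in>I. AE x in M. x \<in> A k i \<longrightarrow> (\<exists>d\<in>D. x \<in> A k d))"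
proof -
  have "\<exists>J\<subseteq>I. countable J \<and> (\<forall>i\<in>I. A k i - (\<Union>j\<in>J. A k j) \<in> null_sets M)" for k
    using A by (intro countable_essential_cover) auto
  then obtain J where J: "\<And>k. J k \<subseteq> I" "\<And>k. countable (J k)"
    "\<And>k i. i \<in> I \<Longrightarrow> A k i - (\<Union>j\<in>J k. A k j) \<in> null_sets M"
    by metis
  have "AE x in M. x \<in> A k i \<longrightarrow> (\<exists>d\<in>(\<Union>k. J k). x \<in> A k d)" if "i \<in> I" for k i
    using AE_not_in[OF J(3)[OF that, of k]] by eventually_elim blast
  moreover have "(\<Union>k. J k) \<subseteq> I" "countable (\<Union>k. J k)"
    using J(1,2) by auto
  ultimately show ?thesis
    by blast
qed

lemma AE_le_if_integral_gap_tendsto_0: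
  fixes X Y :: "'a \<Rightarrow> real" and g :: "nat \<Rightarrow> 'a \<Rightarrow> real"
  assumes "integrable M X" "integrable M Y" "\<And>K. integrable M (g K)"
    and "\<And>K. AE \<omega> in M. X \<omega> \<le> Y \<omega> + g K \<omega>" "\<And>K. AE \<omega> in M. 0 \<le> g K \<omega>"
    and "(\<lambda>K. \<integral>\<omega>. g K \<omega> \<partial>M) \<longlonglongrightarrow> 0"
  shows "AE \<omega> in M. X \<omega> \<le> Y \<omega>"
proof -
  define D where "D \<omega> = max (X \<omega> - Y \<omega>) 0" for \<omega>
  have D_int: "integrable M D"
    unfolding D_def using assms by auto
  have D_nonneg: "AE \<omega> in M. 0 \<le> D \<omega>"
    by (simp add: D_def)
  have "(\<integral>\<omega>. D \<omega> \<partial>M) \<le> (\<integral>\<omega>. g K \<omega> \<partial>M)" for K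
    using assms(4,5)[of K] by (intro integral_mono_AE D_int assms(3)) (auto simp: D_def)
  then have "(\<integral>\<omega>. D \<omega> \<partial>M) \<le> 0"
    using assms(6) by (intro LIMSEQ_le_const) auto
  then have "(\<integral>\<omega>. D \<omega> \<partial>M) = 0"
    using integral_nonneg_AE[OF D_nonneg] by linarith
  then have "AE \<omega> in M. D \<omega> = 0"
    using integral_nonneg_eq_0_iff_AE[OF D_int D_nonneg] by simp
  then show ?thesis
    by eventually_elim (simp add: D_def)
qed

lemma (in prob_space) integral_abs_le_sqrt_integral_square:
  fixes f :: "'a \<Rightarrow> real"
  assumes f: "f \<in> borel_measurable M" and f2: "integrable M (\<lambda>x. (f x)\<^sup>2)"
  shows "(\<integral>x. \<bar>f x\<bar> \<partial>M) \<le> sqrt (\<integral>x. (f x)\<^sup>2 \<partial>M)"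
proof -
  have "integrable M f"
    by (rule square_integrable_imp_integrable[OF f f2])
  then have "variance (\<lambda>x. \<bar>f x\<bar>) = (\<integral>x. \<bar>f x\<bar>\<^sup>2 \<partial>M) - (\<integral>x. \<bar>f x\<bar> \<partial>M)\<^sup>2"
    using f2 by (intro variance_eq) simp_all
  then have "(\<integral>x. \<bar>f x\<bar> \<partial>M)\<^sup>2 \<le> (\<integral>x. (f x)\<^sup>2 \<partial>M)"
    using variance_positive[of "\<lambda>x. \<bar>f x\<bar>"] by simp
  then show ?thesis
    by (rule real_le_rsqrt)
qed

lemma dyadic_bracket:
  fixes v :: real
  assumes "1 < v"
  shows "\<exists>k. 2 ^ k < v \<and> v \<le> 2 ^ Suc k"
proof -
  obtain n where "v \<le> 2 ^ n"
    using real_arch_pow[of 2 v] by (auto intro: less_imp_le)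
  then show ?thesis
    using ex_least_nat_less[of "\<lambda>n. v \<le> 2 ^ n" n] assms by (auto simp: not_le)
qed

lemma (in finite_measure) AE_eventually_not_in_decseq:
  assumes A: "\<And>k. A k \<in> sets M" "decseq A" and lim: "(\<lambda>k. measure M (A k)) \<longlonglongrightarrow> 0"
  shows "AE x in M. \<forall>\<^sub>F k in sequentially. x \<notin> A k"
proof -
  have "measure M (\<Inter>k. A k) \<le> 0"
    using A(1) by (intro LIMSEQ_le_const[OF lim]) (auto intro!: finite_measure_mono)
  then have "measure M (\<Inter>k. A k) = 0"
    by (intro antisym) auto
  moreover have "(\<Inter>k. A k) \<in> sets M"
    using A(1) by auto
  ultimately have "(\<Inter>k. A k) \<in> null_sets M"
    by (simp add: null_sets_def emeasure_eq_measure)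
  then show ?thesis
  proof (rule AE_not_in[THEN eventually_mono])
    fix x assume "x \<notin> (\<Inter>k. A k)"
    then obtain k0 where "x \<notin> A k0"
      by auto
    then show "\<forall>\<^sub>F k in sequentially. x \<notin> A k"
      using A(2) unfolding eventually_sequentially decseq_def by blast
  qed
qed

lemma (in finite_measure) integrable_suminf_scaled_indicators:
  fixes w :: "nat \<Rightarrow> real"
  assumes A: "\<And>k. A k \<in> sets M" "AE x in M. \<forall>\<^sub>F k in sequentially. x \<notin> A k"
    and w: "\<And>k. 0 \<le> w k" "summable (\<lambda>k. w k * measure M (A k))"
  shows "integrable M (\<lambda>x. \<Sum>k. w k * indicator (A k) x)"
proof (rule integrable_suminf)
  show "integrable M (\<lambda>x. w k * indicator (A k) x)" for k
    using A(1) by (intro integrable_mult_right integrable_real_indicator)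
      (simp_all add: less_top[symmetric])
  show "AE x in M. summable (\<lambda>k. norm (w k * indicator (A k) x))"
    using A(2)
  proof eventually_elim
    case (elim x)
    then obtain k0 where "\<And>k. k0 \<le> k \<Longrightarrow> x \<notin> A k"
      unfolding eventually_sequentially by blast
    then show ?case
      by (intro summable_finite[of "{..<k0}"]) auto
  qed
  show "summable (\<lambda>k. \<integral>x. norm (w k * indicator (A k) x) \<partial>M)"
    using w A(1) by (simp add: abs_mult)
qed

lemma powr_le_one_plus_dyadic_sum:
  fixes v a :: real and S :: "nat set"
  assumes v: "0 \<le> v" "\<And>k. 2 ^ k < v \<Longrightarrow> k \<in> S" and a: "0 < a"
    and summable: "summable (\<lambda>k. 2 powr (a * Suc k) * indicator S k)"
  shows "v powr a \<le> 1 + (\<Sum>k. 2 powr (a * Suc k) * indicator S k)"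
proof -
  define g where "g = (\<lambda>k. 2 powr (a * Suc k) * indicator S k :: real)"
  have g_nonneg: "0 \<le> g k" for k
    by (simp add: g_def)
  have "summable g"
    using summable by (simp add: g_def)
  then have g_le: "g k \<le> suminf g" for k
    using sum_le_suminf[of g "{k}"] g_nonneg by simp
  have "0 \<le> suminf g"
    using \<open>summable g\<close> g_nonneg by (rule suminf_nonneg)
  show ?thesis
  proof (cases "v \<le> 1")
    case True
    then show ?thesis
      using v a powr_le1[of a v] \<open>0 \<le> suminf g\<close> by (simp add: g_def)
  next
    case False
    then obtain k where k: "2 ^ k < v" "v \<le> 2 ^ Suc k"
      using dyadic_bracket by force
    have "v powr a \<le> (2 ^ Suc k) powr a"
      using k v a by (intro powr_mono2) auto
    also have "\<dots> = g k"
      using k v by (subst powr_realpow[symmetric]) (auto simp: g_def powr_powr mult.commute)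
    finally show ?thesis
      using g_le[of k] by (simp add: g_def)
  qed
qed

text \<open>A discrete layer-cake bound: the weights \<open>2 powr (a (k + 1))\<close> are summable against the
  measures \<open>C / 2 ^ k\<close> of the layers because \<open>a < 1\<close>.\<close>
lemma (in finite_measure) dyadic_layers_dominator:
  fixes A :: "nat \<Rightarrow> 'a set" and C a :: real
  assumes A: "\<And>k. A k \<in> sets M" "decseq A" "\<And>k. 2 ^ k * measure M (A k) \<le> C"
    and a: "0 < a" "a < 1"
  shows "\<exists>Z. integrable M Z \<and> (AE x in M. \<forall>v\<ge>0. (\<forall>k. 2 ^ k < v \<longrightarrow> x \<in> A k) \<longrightarrow> v powr a \<le> Z x)"
proof -
  define w where "w k = 2 powr (a * Suc k)" for k :: nat
  have measure_le: "measure M (A k) \<le> C / 2 ^ k" for k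
    using A(3)[of k] by (simp add: field_simps)
  have "(\<lambda>k. measure M (A k)) \<longlonglongrightarrow> 0"
  proof (rule real_tendsto_sandwich[OF always_eventually always_eventually tendsto_const])
    show "(\<lambda>k. C / 2 ^ k) \<longlonglongrightarrow> 0"
      by (intro tendsto_divide_0[OF tendsto_const]) (simp add: filterlim_realpow_sequentially_gt1)
  qed (use measure_le in auto)
  then have not_in: "AE x in M. \<forall>\<^sub>F k in sequentially. x \<notin> A k"
    by (rule AE_eventually_not_in_decseq[OF A(1,2)])
  have "summable (\<lambda>k. w k * measure M (A k))"
  proof (rule summable_comparison_test)
    have "norm (2 powr (a - 1)) < (1::real)"
      using a powr_less_mono[of "a - 1" 0 2] by simp
    then show "summable (\<lambda>k. 2 powr a * C * (2 powr (a - 1)) ^ k)"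
      by (intro summable_mult summable_geometric)
    have "norm (w k * measure M (A k)) \<le> 2 powr a * C * (2 powr (a - 1)) ^ k" for k
    proof -
      have "w k / 2 ^ k = 2 powr (a * Suc k - k)"
        by (simp add: w_def powr_diff powr_realpow)
      also have "\<dots> = 2 powr a * (2 powr (a - 1)) powr k"
        by (simp add: powr_add [symmetric] powr_powr algebra_simps)
      also have "\<dots> = 2 powr a * (2 powr (a - 1)) ^ k"
        by (simp add: powr_realpow)
      finally have "w k * (C / 2 ^ k) = 2 powr a * C * (2 powr (a - 1)) ^ k"
        by (simp add: field_simps)
      moreover have "w k * measure M (A k) \<le> w k * (C / 2 ^ k)"
        using measure_le by (intro mult_left_mono) (auto simp: w_def)
      ultimately show ?thesis
        by (simp add: w_def)
    qed
    then show "\<exists>N. \<forall>k\<ge>N. norm (w k * measure M (A k)) \<le> 2 powr a * C * (2 powr (a - 1)) ^ k"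
      by blast
  qed
  then have Z_int: "integrable M (\<lambda>x. 1 + (\<Sum>k. w k * indicator (A k) x))"
    using A(1) not_in by (intro Bochner_Integration.integrable_add integrable_const
        integrable_suminf_scaled_indicators) (auto simp: w_def)
  have "AE x in M. \<forall>v\<ge>0. (\<forall>k. 2 ^ k < v \<longrightarrow> x \<in> A k) \<longrightarrow> v powr a \<le> 1 + (\<Sum>k. w k * indicator (A k) x)"
    using not_in
  proof eventually_elim
    case (elim x)
    have ind: "indicator {k. x \<in> A k} k = (indicator (A k) x :: real)" for k
      by (simp add: indicator_def)
    obtain k0 where "\<And>k. k0 \<le> k \<Longrightarrow> x \<notin> A k"
      using elim unfolding eventually_sequentially by blast
    then have "summable (\<lambda>k. 2 powr (a * Suc k) * indicator {k. x \<in> A k} k)"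
      by (intro summable_finite[of "{..<k0}"]) (auto simp: ind)
    then show ?case
      using powr_le_one_plus_dyadic_sum[of _ "{k. x \<in> A k}" a] a by (auto simp: w_def ind)
  qed
  with Z_int show ?thesis
    by blast
qed

section \<open>Conditional expectations along a filtration\<close>

context sigma_finite_subalgebra
begin

lemma abs_real_cond_exp_le:
  assumes "integrable M Y"
  shows "AE x in M. \<bar>real_cond_exp M F Y x\<bar> \<le> real_cond_exp M F (\<lambda>x. \<bar>Y x\<bar>) x"
proof -
  have "AE x in M. real_cond_exp M F Y x \<le> real_cond_exp M F (\<lambda>x. \<bar>Y x\<bar>) x"
    using assms by (intro real_cond_exp_mono) auto
  moreover have "AE x in M. real_cond_exp M F (\<lambda>x. - Y x) x \<le> real_cond_exp M F (\<lambda>x. \<bar>Y x\<bar>) x"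
    using assms by (intro real_cond_exp_mono) auto
  moreover have "AE x in M. real_cond_exp M F (\<lambda>x. - Y x) x = - real_cond_exp M F Y x"
    using real_cond_exp_cmult[of "\<lambda>x. Y x" "-1"] assms by simp
  ultimately show ?thesis
    by eventually_elim auto
qed

lemma real_cond_exp_powr_le:
  assumes X: "integrable M X" "AE x in M. 0 < X x" and "integrable M (\<lambda>x. X x powr s)" "1 \<le> s"
  shows "AE x in M. 0 < real_cond_exp M F X x \<and>
    real_cond_exp M F X x powr s \<le> real_cond_exp M F (\<lambda>x. X x powr s) x"
proof -
  have "AE x in M. X x \<in> {0<..}"
    using X(2) by simp
  from real_cond_exp_jensens_inequality[OF X(1) this _ assms(3) powr_convex[OF assms(4)]] show ?thesis
    by auto
qed

end

lemma first_passage_decomposition: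
  fixes T :: "'t::linorder set"
  assumes T: "finite T"
  shows "{x\<in>S. \<exists>d\<in>T. P d x} = (\<Union>d\<in>T. {x\<in>S. P d x \<and> (\<forall>d'\<in>{d'\<in>T. d' < d}. \<not> P d' x)})"
    and "disjoint_family_on (\<lambda>d. {x\<in>S. P d x \<and> (\<forall>d'\<in>{d'\<in>T. d' < d}. \<not> P d' x)}) T"
proof -
  show "disjoint_family_on (\<lambda>d. {x\<in>S. P d x \<and> (\<forall>d'\<in>{d'\<in>T. d' < d}. \<not> P d' x)}) T"
  proof (unfold disjoint_family_on_def, intro ballI impI)
    fix m n assume "m \<in> T" "n \<in> T" "m \<noteq> n"
    then consider "m < n" | "n < m"
      by (meson neq_iff)
    then show "{x\<in>S. P m x \<and> (\<forall>d'\<in>{d'\<in>T. d' < m}. \<not> P d' x)}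
        \<inter> {x\<in>S. P n x \<and> (\<forall>d'\<in>{d'\<in>T. d' < n}. \<not> P d' x)} = {}"
      using \<open>m \<in> T\<close> \<open>n \<in> T\<close> by cases auto
  qed
  show "{x\<in>S. \<exists>d\<in>T. P d x} = (\<Union>d\<in>T. {x\<in>S. P d x \<and> (\<forall>d'\<in>{d'\<in>T. d' < d}. \<not> P d' x)})"
  proof (intro equalityI subsetI)
    fix x assume "x \<in> {x\<in>S. \<exists>d\<in>T. P d x}"
    then have x: "x \<in> S" and ne: "{d\<in>T. P d x} \<noteq> {}"
      by auto
    define d0 where "d0 = Min {d\<in>T. P d x}"
    have "d0 \<in> {d\<in>T. P d x}"
      unfolding d0_def using T ne by (intro Min_in) auto
    moreover have "\<not> P d' x" if "d' \<in> T" "d' < d0" for d'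
    proof
      assume "P d' x"
      then have "d0 \<le> d'"
        unfolding d0_def using T that by (intro Min_le) auto
      with that show False
        by simp
    qed
    ultimately show "x \<in> (\<Union>d\<in>T. {x\<in>S. P d x \<and> (\<forall>d'\<in>{d'\<in>T. d' < d}. \<not> P d' x)})"
      using x by auto
  qed auto
qed

lemma sum_integral_indicator_le:
  fixes Y :: "'a \<Rightarrow> real"
  assumes T: "finite T" "disjoint_family_on B T" and B: "\<And>d. d \<in> T \<Longrightarrow> B d \<in> sets M"
    and Y: "integrable M Y" "AE x in M. 0 \<le> Y x"
  shows "(\<Sum>d\<in>T. \<integral>x. indicator (B d) x * Y x \<partial>M) \<le> (\<integral>x. Y x \<partial>M)"
proof -
  have Y_B: "integrable M (\<lambda>x. indicator (B d) x * Y x)" if "d \<in> T" for d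
    using integrable_mult_indicator[OF B[OF that] Y(1)] by simp
  have "(\<Sum>d\<in>T. \<integral>x. indicator (B d) x * Y x \<partial>M) = (\<integral>x. (\<Sum>d\<in>T. indicator (B d) x * Y x) \<partial>M)"
    using Y_B by (rule Bochner_Integration.integral_sum[symmetric])
  also have "\<dots> = (\<integral>x. indicator (\<Union>d\<in>T. B d) x * Y x \<partial>M)"
    by (simp only: indicator_UN_disjoint[OF T] sum_distrib_right)
  also have "\<dots> \<le> (\<integral>x. Y x \<partial>M)"
  proof (rule integral_mono_AE)
    have "(\<Union>d\<in>T. B d) \<in> sets M"
      using T B by (intro sets.finite_UN) auto
    then show "integrable M (\<lambda>x. indicator (\<Union>d\<in>T. B d) x * Y x)"
      using integrable_mult_indicator[OF _ Y(1)] by simp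
    show "AE x in M. indicator (\<Union>d\<in>T. B d) x * Y x \<le> Y x"
      using Y(2) by eventually_elim (auto simp: indicator_def)
  qed (rule Y(1))
  finally show ?thesis .
qed

locale filtered_prob_space = prob_space M for M :: "'a measure" +
  fixes F :: "'t::linorder \<Rightarrow> 'a measure"
  assumes subalgebra_F: "\<And>t. subalgebra M (F t)"
    and sets_F_mono: "\<And>s t. s \<le> t \<Longrightarrow> sets (F s) \<subseteq> sets (F t)"
begin

lemma sigma_finite_subalgebra_F: "sigma_finite_subalgebra M (F t)"
  using subalgebra_F finite_measure_axioms
  by (intro finite_measure_subalgebra_is_sigma_finite)
    (auto simp: finite_measure_subalgebra_def finite_measure_subalgebra_axioms_def)

lemma sets_F_subset: "A \<in> sets (F t) \<Longrightarrow> A \<in> sets M"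
  using subalgebra_F[of t] by (auto simp: subalgebra_def)

lemma subalgebra_F_mono: "s \<le> t \<Longrightarrow> subalgebra (F t) (F s)"
  using subalgebra_F[of s] subalgebra_F[of t] sets_F_mono[of s t] by (auto simp: subalgebra_def)

lemma measurable_F_mono: "s \<le> t \<Longrightarrow> f \<in> borel_measurable (F s) \<Longrightarrow> f \<in> borel_measurable (F t)"
  using measurable_from_subalg[OF subalgebra_F_mono] by blast

lemma measurable_F_imp_M: "f \<in> borel_measurable (F t) \<Longrightarrow> f \<in> borel_measurable M"
  using measurable_from_subalg[OF subalgebra_F] by blast

lemma measure_le_integral_if_real_cond_exp_ge:
  fixes Y :: "'a \<Rightarrow> real"
  assumes Y: "integrable M Y" and B: "B \<in> sets (F t)" and ge: "\<And>x. x \<in> B \<Longrightarrow> l \<le> real_cond_exp M (F t) Y x"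
  shows "l * measure M B \<le> (\<integral>x. indicator B x * Y x \<partial>M)"
proof -
  interpret S: sigma_finite_subalgebra M "F t"
    by (rule sigma_finite_subalgebra_F)
  have B_M: "B \<in> sets M"
    using B sets_F_subset by blast
  have "l * measure M B = (\<integral>x. indicator B x * l \<partial>M)"
    using B_M by (simp add: sets.Int_space_eq2)
  also have "\<dots> \<le> (\<integral>x. indicator B x * real_cond_exp M (F t) Y x \<partial>M)"
  proof (rule integral_mono)
    show "integrable M (\<lambda>x. indicator B x * real_cond_exp M (F t) Y x)"
      using integrable_mult_indicator[OF B_M S.real_cond_exp_int(1)[OF Y]] by simp
    show "indicator B x * l \<le> indicator B x * real_cond_exp M (F t) Y x" for x
      using ge by (auto simp: indicator_def)
  qed (use B_M in \<open>auto simp: emeasure_eq_measure\<close>)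
  also have "\<dots> = (\<integral>x. indicator B x * Y x \<partial>M)"
    using integrable_mult_indicator[OF B_M Y] B Y by (intro S.real_cond_exp_intg(2)) auto
  finally show ?thesis .
qed

lemma maximal_inequality_finite:
  fixes Y :: "'a \<Rightarrow> real"
  assumes Y: "integrable M Y" "AE x in M. 0 \<le> Y x" and T: "finite T"
  shows "l * measure M {x\<in>space M. \<exists>d\<in>T. l < real_cond_exp M (F d) Y x} \<le> (\<integral>x. Y x \<partial>M)"
proof -
  define N where "N d = real_cond_exp M (F d) Y" for d
  define B where "B d = {x\<in>space M. l < N d x \<and> (\<forall>d'\<in>{d'\<in>T. d' < d}. \<not> l < N d' x)}" for d
  have B_F: "B d \<in> sets (F d)" for d
  proof -
    have [measurable]: "N d' \<in> borel_measurable (F d)" if "d' \<le> d" for d'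
      unfolding N_def using that by (intro measurable_F_mono[of d' d]) auto
    have "Measurable.pred (F d) (\<lambda>x. l < N d x \<and> (\<forall>d'\<in>{d'\<in>T. d' < d}. \<not> l < N d' x))"
      using T by (intro pred_intros_logic pred_intros_finite(3)) auto
    then show ?thesis
      using subalgebra_F[of d] by (simp add: B_def pred_def subalgebra_def)
  qed
  have B_M: "B d \<in> sets M" for d
    using B_F sets_F_subset by blast
  have disjoint: "disjoint_family_on B T"
    unfolding B_def by (rule first_passage_decomposition(2)[OF T])
  have "l * measure M (\<Union>d\<in>T. B d) = (\<Sum>d\<in>T. l * measure M (B d))"
    using T disjoint B_M by (simp add: measure_finite_Union sum_distrib_left image_subset_iff)
  also have "\<dots> \<le> (\<Sum>d\<in>T. \<integral>x. indicator (B d) x * Y x \<partial>M)"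
    using B_F Y(1) by (intro sum_mono measure_le_integral_if_real_cond_exp_ge) (auto simp: B_def N_def)
  also have "\<dots> \<le> (\<integral>x. Y x \<partial>M)"
    using B_M by (intro sum_integral_indicator_le[OF T disjoint _ Y])
  also have "(\<Union>d\<in>T. B d) = {x\<in>space M. \<exists>d\<in>T. l < real_cond_exp M (F d) Y x}"
    unfolding B_def N_def by (rule first_passage_decomposition(1)[OF T, symmetric])
  finally show ?thesis .
qed

lemma maximal_inequality_countable:
  fixes Y :: "'a \<Rightarrow> real"
  assumes Y: "integrable M Y" "AE x in M. 0 \<le> Y x" and D: "countable D"
  shows "l * measure M {x\<in>space M. \<exists>d\<in>D. l < real_cond_exp M (F d) Y x} \<le> (\<integral>x. Y x \<partial>M)"
proof (cases "D = {}")
  case True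
  then show ?thesis
    using Y by (simp add: integral_nonneg_AE)
next
  case False
  define N where "N d = real_cond_exp M (F d) Y" for d
  have [measurable]: "N d \<in> borel_measurable M" for d
    unfolding N_def by simp
  define e where "e = from_nat_into D"
  define U where "U n = {x\<in>space M. \<exists>d\<in>e ` {..n}. l < N d x}" for n
  have "incseq U"
    unfolding U_def incseq_def by force
  moreover have "U n \<in> sets M" for n
    unfolding U_def by measurable
  ultimately have "(\<lambda>n. l * measure M (U n)) \<longlonglongrightarrow> l * measure M (\<Union>n. U n)"
    by (intro tendsto_mult_left finite_Lim_measure_incseq) auto
  moreover have "(\<Union>n. U n) = {x\<in>space M. \<exists>d\<in>D. l < N d x}"
    using range_from_nat_into[OF False D] unfolding U_def e_def
    by (auto; metis atMost_iff order_refl rangeE)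
  moreover have "l * measure M (U n) \<le> (\<integral>x. Y x \<partial>M)" for n
    unfolding U_def N_def using Y by (intro maximal_inequality_finite) auto
  ultimately show ?thesis
    unfolding N_def by (intro LIMSEQ_le_const2) auto
qed

text \<open>The times \<open>t\<close> range over an uncountable set. For each dyadic level, an essential union
  (\<open>AE_countable_cover\<close>) reduces the exceedance events to countably many times, where Doob's
  maximal inequality applies.\<close>
lemma real_cond_exp_powr_dominated:
  fixes Y :: "'a \<Rightarrow> real"
  assumes Y: "integrable M Y" "AE x in M. 0 \<le> Y x" and a: "0 < a" "a < 1"
  shows "\<exists>Z. integrable M Z \<and> (\<forall>t. AE x in M. real_cond_exp M (F t) Y x powr a \<le> Z x)"
proof -
  define N where "N t = real_cond_exp M (F t) Y" for t
  have [measurable]: "N t \<in> borel_measurable M" for t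
    unfolding N_def by simp
  obtain D where D: "countable D" and cover: "\<And>k t. AE x in M. x \<in> {x\<in>space M. 2 ^ k < N t x} \<longrightarrow>
      (\<exists>d\<in>D. x \<in> {x\<in>space M. 2 ^ k < N d x})"
    using AE_countable_cover[of UNIV "\<lambda>k t. {x\<in>space M. 2 ^ k < N t x}"] by auto
  define A where "A k = {x\<in>space M. \<exists>d\<in>D. 2 ^ k < N d x}" for k :: nat
  have A_sets: "A k \<in> sets M" for k
    unfolding A_def by (intro sets.sets_Collect_countable_Ex' D) measurable
  have A_dec: "decseq A"
    unfolding decseq_def A_def
  proof (intro allI impI subsetI)
    fix m n :: nat and x assume "m \<le> n" "x \<in> {x\<in>space M. \<exists>d\<in>D. 2 ^ n < N d x}"
    moreover have "(2::real) ^ m \<le> 2 ^ n"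
      using \<open>m \<le> n\<close> by simp
    ultimately show "x \<in> {x\<in>space M. \<exists>d\<in>D. 2 ^ m < N d x}"
      by (blast intro: le_less_trans)
  qed
  have A_measure: "2 ^ k * measure M (A k) \<le> (\<integral>x. Y x \<partial>M)" for k
    unfolding A_def N_def using Y D by (intro maximal_inequality_countable) auto
  obtain Z where Z: "integrable M Z"
    "AE x in M. \<forall>v\<ge>0. (\<forall>k. 2 ^ k < v \<longrightarrow> x \<in> A k) \<longrightarrow> v powr a \<le> Z x"
    using dyadic_layers_dominator[OF A_sets A_dec A_measure a] by blast
  have "AE x in M. N t x powr a \<le> Z x" for t
  proof -
    have "AE x in M. 2 ^ k < N t x \<longrightarrow> x \<in> A k" for k
      using cover[of k t] AE_space by eventually_elim (auto simp: A_def)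
    then have "AE x in M. \<forall>k. 2 ^ k < N t x \<longrightarrow> x \<in> A k"
      by (simp add: AE_all_countable)
    moreover have "AE x in M. 0 \<le> N t x"
      unfolding N_def using Y
      by (intro sigma_finite_subalgebra.real_cond_exp_pos[OF sigma_finite_subalgebra_F]) auto
    ultimately show ?thesis
      using Z(2) by eventually_elim auto
  qed
  with Z(1) show ?thesis
    unfolding N_def by blast
qed

end

lemma sets_bm_filtration:
  "sets (bm_filtration M W t) =
    sigma_sets (space M) ({W s -` A \<inter> space M | s A. 0 \<le> s \<and> s \<le> t \<and> A \<in> sets borel} \<union> null_sets M)"
  unfolding bm_filtration_def
  by (rule sets_measure_of) (use sets.sets_into_space[of _ M] in \<open>auto simp: null_sets_def\<close>)

lemma space_bm_filtration: "space (bm_filtration M W t) = space M"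
  unfolding bm_filtration_def
  by (rule space_measure_of) (use sets.sets_into_space[of _ M] in \<open>auto simp: null_sets_def\<close>)

lemma filtered_prob_space_bm_filtration:
  assumes "prob_space M" "brownian_motion M W"
  shows "filtered_prob_space M (bm_filtration M W)"
proof -
  have W_meas: "0 \<le> s \<Longrightarrow> W s \<in> borel_measurable M" for s
    using assms(2) by (simp add: brownian_motion_def)
  have "sets (bm_filtration M W t) \<subseteq> sets M" for t
    unfolding sets_bm_filtration
  proof (rule sets.sigma_sets_subset)
    show "{W s -` A \<inter> space M | s A. 0 \<le> s \<and> s \<le> t \<and> A \<in> sets borel} \<union> null_sets M \<subseteq> sets M"
      using W_meas by (auto simp: null_sets_def measurable_sets)
  qed
  then have "subalgebra M (bm_filtration M W t)" for t
    by (simp add: subalgebra_def space_bm_filtration)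
  moreover have "sets (bm_filtration M W s) \<subseteq> sets (bm_filtration M W t)" if "s \<le> t" for s t
    unfolding sets_bm_filtration
  proof (rule sigma_sets_mono')
    show "{W r -` A \<inter> space M | r A. 0 \<le> r \<and> r \<le> s \<and> A \<in> sets borel} \<union> null_sets M
      \<subseteq> {W r -` A \<inter> space M | r A. 0 \<le> r \<and> r \<le> t \<and> A \<in> sets borel} \<union> null_sets M"
      using that by (auto 0 3 intro: order_trans)
  qed
  ultimately show ?thesis
    using assms(1) by (intro filtered_prob_space.intro filtered_prob_space_axioms.intro)
qed

section \<open>A priori bound for the discrete scheme\<close>

lemma grid_iff: "t \<in> grid h \<longleftrightarrow> (\<exists>n::nat. t = real n * h)"
  by (auto simp: grid_def)

lemma grid_add: "t \<in> grid h \<Longrightarrow> t + real k * h \<in> grid h"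
  unfolding grid_iff by (metis of_nat_add distrib_right)

lemma grid_nonneg: "0 \<le> h \<Longrightarrow> t \<in> grid h \<Longrightarrow> 0 \<le> t"
  unfolding grid_iff by auto

lemma abs_implicit_step_le:
  fixes y c fy f0 E L h :: real
  assumes "y = c + h * fy" "\<bar>fy - f0\<bar> \<le> L * \<bar>y\<bar>" "\<bar>c\<bar> \<le> E" "0 < h" "L * h < 1"
  shows "\<bar>y\<bar> \<le> (E + h * \<bar>f0\<bar>) / (1 - L * h)"
proof -
  have "h * \<bar>fy\<bar> \<le> h * (\<bar>f0\<bar> + L * \<bar>y\<bar>)"
    using assms(2,4) abs_triangle_ineq2[of fy f0] by (intro mult_left_mono) auto
  moreover have "\<bar>y\<bar> \<le> \<bar>c\<bar> + h * \<bar>fy\<bar>"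
    using assms(1,4) abs_triangle_ineq[of c "h * fy"] by (simp add: abs_mult)
  ultimately have "(1 - L * h) * \<bar>y\<bar> \<le> E + h * \<bar>f0\<bar>"
    using assms(3) by (simp add: algebra_simps)
  then show ?thesis
    using assms(5) by (simp add: field_simps)
qed

locale disc_scheme = filtered_prob_space M F for M :: "'a measure" and F :: "real \<Rightarrow> 'a measure" +
  fixes Lf h :: real and tau xi :: "'a \<Rightarrow> real" and f :: "real \<Rightarrow> 'a \<Rightarrow> real \<Rightarrow> real"
    and Y :: "real \<Rightarrow> 'a \<Rightarrow> real"
  assumes Lf_pos: "0 < Lf" and h_pos: "0 < h" and Lf_h: "Lf * h \<le> 1/12"
    and tau_stopping_time: "stopping_time F tau"
    and tau_grid: "\<forall>\<omega>\<in>space M. tau \<omega> \<in> grid h"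
    and f_lipschitz: "\<forall>t\<in>grid h. \<forall>\<omega> x y. \<bar>f t \<omega> x - f t \<omega> y\<bar> \<le> Lf * \<bar>x - y\<bar>"
    and f_adapted: "\<forall>t\<in>grid h. \<forall>A. A \<in> borel_measurable (F t) \<longrightarrow>
      (\<lambda>\<omega>. f t \<omega> (A \<omega>)) \<in> borel_measurable (F t)"
    and fixpoint: "disc_fixpoint M F Lf h tau xi f Y"
begin

lemma Y_adapted: "t \<in> grid h \<Longrightarrow> Y t \<in> borel_measurable (F t)"
  and Y_square_integrable: "t \<in> grid h \<Longrightarrow> integrable M (\<lambda>\<omega>. (Y t \<omega>)\<^sup>2)"
  and Y_after_tau: "t \<in> grid h \<Longrightarrow> AE \<omega> in M. tau \<omega> < t \<longrightarrow> Y t \<omega> = 0"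
  and Y_weighted_summable: "summable (\<lambda>n::nat. (1 - 3 * Lf * h) powr (- real n) *
     sqrt (\<integral>\<omega>. (indicator {\<omega>. real n * h \<le> tau \<omega>} \<omega> * Y (real n * h) \<omega>)\<^sup>2 \<partial>M))"
  and Y_recursion: "t \<in> grid h \<Longrightarrow> AE \<omega> in M. Y t \<omega> =
     indicator {\<omega>. t < tau \<omega>} \<omega> * real_cond_exp M (F t) (Y (t + h)) \<omega>
     + indicator {\<omega>. t < tau \<omega>} \<omega> * h * f t \<omega> (Y t \<omega>)
     + indicator {\<omega>. t = tau \<omega>} \<omega> * xi \<omega>"
  using fixpoint by (auto simp: disc_fixpoint_def)

lemma Y_measurable: "t \<in> grid h \<Longrightarrow> Y t \<in> borel_measurable M"
  using Y_adapted measurable_F_imp_M by blast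

lemma Y_integrable: "t \<in> grid h \<Longrightarrow> integrable M (Y t)"
  using Y_measurable Y_square_integrable by (rule square_integrable_imp_integrable)

lemma tau_measurable [measurable]: "tau \<in> borel_measurable M"
  by (rule measurable_stopping_time[OF tau_stopping_time])
    (use subalgebra_F in \<open>auto simp: subalgebra_def\<close>)

lemma f0_measurable: "t \<in> grid h \<Longrightarrow> (\<lambda>\<omega>. f t \<omega> 0) \<in> borel_measurable M"
  using f_adapted measurable_F_imp_M[of "\<lambda>\<omega>. f t \<omega> 0" t] by auto

definition gain :: real where
  "gain = 1 / (1 - Lf * h)"

text \<open>The inhomogeneity of the one-step bound; at \<open>t = tau\<close> it carries the terminal value.\<close>
definition source :: "real \<Rightarrow> 'a \<Rightarrow> real" where
  "source t \<omega> = (if t < tau \<omega> then gain * h * \<bar>f t \<omega> 0\<bar> else 0) + (if t = tau \<omega> then \<bar>Y t \<omega>\<bar> else 0)"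

lemma gain_ge_1: "1 \<le> gain"
  using Lf_pos h_pos Lf_h by (simp add: gain_def)

lemma source_nonneg: "0 \<le> source t \<omega>"
  using gain_ge_1 h_pos by (simp add: source_def)

lemma source_measurable: "t \<in> grid h \<Longrightarrow> source t \<in> borel_measurable M"
  using f0_measurable Y_measurable unfolding source_def by measurable

lemma source_integrable:
  assumes "integrable M Bf" "\<forall>t\<in>grid h. AE \<omega> in M. t < tau \<omega> \<longrightarrow> \<bar>f t \<omega> 0\<bar> \<le> Bf \<omega>"
    and t: "t \<in> grid h"
  shows "integrable M (source t)"
proof (rule Bochner_Integration.integrable_bound)
  show "integrable M (\<lambda>\<omega>. gain * h * \<bar>Bf \<omega>\<bar> + \<bar>Y t \<omega>\<bar>)"
    using assms Y_integrable[OF t] by auto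
  show "AE \<omega> in M. norm (source t \<omega>) \<le> norm (gain * h * \<bar>Bf \<omega>\<bar> + \<bar>Y t \<omega>\<bar>)"
    using bspec[OF assms(2) t]
  proof eventually_elim
    case (elim \<omega>)
    have "gain * h * \<bar>f t \<omega> 0\<bar> \<le> gain * h * \<bar>Bf \<omega>\<bar>" if "t < tau \<omega>"
      using elim that gain_ge_1 h_pos by (intro mult_left_mono) auto
    then have "source t \<omega> \<le> gain * h * \<bar>Bf \<omega>\<bar> + \<bar>Y t \<omega>\<bar>"
      using gain_ge_1 h_pos by (auto simp: source_def intro: add_increasing2)
    then show ?case
      using source_nonneg gain_ge_1 h_pos by simp
  qed
qed (rule source_measurable[OF t])

text \<open>The contraction \<open>gain = 1 / (1 - Lf h)\<close> absorbs the implicit Lipschitz term \<open>h f(t, Y t)\<close>.\<close>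
lemma abs_Y_one_step:
  assumes t: "t \<in> grid h"
  shows "AE \<omega> in M. \<bar>Y t \<omega>\<bar> \<le> gain * real_cond_exp M (F t) (\<lambda>\<omega>. \<bar>Y (t + h) \<omega>\<bar>) \<omega> + source t \<omega>"
proof -
  interpret S: sigma_finite_subalgebra M "F t"
    by (rule sigma_finite_subalgebra_F)
  have t': "t + h \<in> grid h"
    using grid_add[OF t, of 1] by simp
  have "AE \<omega> in M. \<bar>real_cond_exp M (F t) (Y (t + h)) \<omega>\<bar> \<le> real_cond_exp M (F t) (\<lambda>\<omega>. \<bar>Y (t + h) \<omega>\<bar>) \<omega>"
    by (rule S.abs_real_cond_exp_le[OF Y_integrable[OF t']])
  moreover have "AE \<omega> in M. 0 \<le> real_cond_exp M (F t) (\<lambda>\<omega>. \<bar>Y (t + h) \<omega>\<bar>) \<omega>"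
    using Y_measurable[OF t'] by (intro S.real_cond_exp_pos) auto
  ultimately show ?thesis
    using Y_recursion[OF t] Y_after_tau[OF t]
  proof eventually_elim
    case (elim \<omega>)
    define E where "E = real_cond_exp M (F t) (\<lambda>\<omega>. \<bar>Y (t + h) \<omega>\<bar>) \<omega>"
    consider "t < tau \<omega>" | "t = tau \<omega>" | "tau \<omega> < t"
      by linarith
    then show ?case
    proof cases
      case 1
      have "\<bar>Y t \<omega>\<bar> \<le> (E + h * \<bar>f t \<omega> 0\<bar>) / (1 - Lf * h)"
      proof (rule abs_implicit_step_le)
        show "Y t \<omega> = real_cond_exp M (F t) (Y (t + h)) \<omega> + h * f t \<omega> (Y t \<omega>)"
          using elim(3) 1 by simp
        show "\<bar>f t \<omega> (Y t \<omega>) - f t \<omega> 0\<bar> \<le> Lf * \<bar>Y t \<omega>\<bar>"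
          using bspec[OF f_lipschitz t, rule_format, of \<omega> "Y t \<omega>" 0] by simp
      qed (use elim(1) h_pos Lf_h in \<open>auto simp: E_def\<close>)
      then show ?thesis
        using 1 by (simp add: E_def source_def gain_def add_divide_distrib algebra_simps)
    next
      case 2
      then show ?thesis
        using elim gain_ge_1 by (simp add: source_def)
    next
      case 3
      then show ?thesis
        using elim gain_ge_1 source_nonneg[of t \<omega>] by simp
    qed
  qed
qed

lemma real_cond_exp_abs_Y_one_step:
  assumes source_s: "integrable M (source s)" and s: "s \<in> grid h" "t \<le> s"
  shows "AE \<omega> in M. real_cond_exp M (F t) (\<lambda>\<omega>. \<bar>Y s \<omega>\<bar>) \<omega>
    \<le> gain * real_cond_exp M (F t) (\<lambda>\<omega>. \<bar>Y (s + h) \<omega>\<bar>) \<omega> + real_cond_exp M (F t) (source s) \<omega>"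
proof -
  interpret S: sigma_finite_subalgebra M "F t"
    by (rule sigma_finite_subalgebra_F)
  have s': "s + h \<in> grid h"
    using grid_add[OF s(1), of 1] by simp
  let ?E = "real_cond_exp M (F s) (\<lambda>\<omega>. \<bar>Y (s + h) \<omega>\<bar>)"
  have E_int: "integrable M ?E"
    using Y_integrable[OF s']
    by (intro sigma_finite_subalgebra.real_cond_exp_int(1)[OF sigma_finite_subalgebra_F]) auto
  have "AE \<omega> in M. real_cond_exp M (F t) (\<lambda>\<omega>. \<bar>Y s \<omega>\<bar>) \<omega>
      \<le> real_cond_exp M (F t) (\<lambda>\<omega>. gain * ?E \<omega> + source s \<omega>) \<omega>"
    using abs_Y_one_step[OF s(1)] Y_integrable[OF s(1)] E_int source_s
    by (intro S.real_cond_exp_mono) auto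
  moreover have "AE \<omega> in M. real_cond_exp M (F t) (\<lambda>\<omega>. gain * ?E \<omega> + source s \<omega>) \<omega>
      = real_cond_exp M (F t) (\<lambda>\<omega>. gain * ?E \<omega>) \<omega> + real_cond_exp M (F t) (source s) \<omega>"
    using E_int source_s by (intro S.real_cond_exp_add) auto
  moreover have "AE \<omega> in M. real_cond_exp M (F t) (\<lambda>\<omega>. gain * ?E \<omega>) \<omega> = gain * real_cond_exp M (F t) ?E \<omega>"
    by (rule S.real_cond_exp_cmult[OF E_int])
  moreover have "AE \<omega> in M. real_cond_exp M (F t) ?E \<omega> = real_cond_exp M (F t) (\<lambda>\<omega>. \<bar>Y (s + h) \<omega>\<bar>) \<omega>"
    using Y_integrable[OF s']
    by (intro S.real_cond_exp_nested_subalg subalgebra_F subalgebra_F_mono s(2)) auto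
  ultimately show ?thesis
    by eventually_elim simp
qed

lemma abs_Y_iterated:
  assumes source_int: "\<forall>s\<in>grid h. integrable M (source s)" and t: "t \<in> grid h"
  shows "AE \<omega> in M. \<bar>Y t \<omega>\<bar> \<le> (\<Sum>k<K. gain ^ k * real_cond_exp M (F t) (source (t + real k * h)) \<omega>)
    + gain ^ K * real_cond_exp M (F t) (\<lambda>\<omega>. \<bar>Y (t + real K * h) \<omega>\<bar>) \<omega>"
proof (induction K)
  case 0
  have "AE \<omega> in M. real_cond_exp M (F t) (\<lambda>\<omega>. \<bar>Y t \<omega>\<bar>) \<omega> = \<bar>Y t \<omega>\<bar>"
    using Y_adapted[OF t] Y_integrable[OF t]
    by (intro sigma_finite_subalgebra.real_cond_exp_F_meas[OF sigma_finite_subalgebra_F]) auto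
  then show ?case
    by eventually_elim simp
next
  case (Suc K)
  define s where "s = t + real K * h"
  have s: "s \<in> grid h" "t \<le> s" and s_next: "s + h = t + real (Suc K) * h"
    using grid_add[OF t] h_pos by (auto simp: s_def algebra_simps)
  have "integrable M (source s)"
    using source_int s(1) by blast
  from real_cond_exp_abs_Y_one_step[OF this s] Suc.IH show ?case
  proof eventually_elim
    case (elim \<omega>)
    have "gain ^ K * real_cond_exp M (F t) (\<lambda>\<omega>. \<bar>Y s \<omega>\<bar>) \<omega>
        \<le> gain ^ K * (gain * real_cond_exp M (F t) (\<lambda>\<omega>. \<bar>Y (s + h) \<omega>\<bar>) \<omega>
          + real_cond_exp M (F t) (source s) \<omega>)"
      using elim(1) gain_ge_1 by (intro mult_left_mono) auto
    then show ?case
      using elim(2) unfolding s_next[symmetric] by (simp add: s_def algebra_simps)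
  qed
qed

lemma gain_power_le_exp: "gain ^ n \<le> exp (7/6 * Lf * (real n * h))"
proof -
  have "gain \<le> exp (7/6 * (Lf * h))"
    unfolding gain_def using Lf_pos h_pos Lf_h by (intro inverse_one_minus_le_exp) auto
  then have "gain ^ n \<le> exp (7/6 * (Lf * h)) ^ n"
    using gain_ge_1 by (intro power_mono) auto
  then show ?thesis
    by (simp add: exp_of_nat_mult[symmetric] algebra_simps)
qed

lemma source_sum_le_pointwise:
  assumes m: "t = real m * h" and n: "tau \<omega> = real n * h" and "0 \<le> b" "0 \<le> d"
    and f_le: "\<And>k. t + real k * h < tau \<omega> \<Longrightarrow> \<bar>f (t + real k * h) \<omega> 0\<bar> \<le> b"
    and Y_le: "\<And>k. t + real k * h = tau \<omega> \<Longrightarrow> \<bar>Y (t + real k * h) \<omega>\<bar> \<le> d"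
  shows "(\<Sum>k<K. gain ^ k * source (t + real k * h) \<omega>) \<le> exp (7/6 * Lf * tau \<omega>) * (tau \<omega> * b + d)"
proof -
  have time: "t + real k * h = real (m + k) * h" for k
    by (simp add: m algebra_simps)
  have before: "t + real k * h < tau \<omega> \<longleftrightarrow> k < n - m" for k
  proof -
    have "t + real k * h < tau \<omega> \<longleftrightarrow> m + k < n"
      unfolding time n using h_pos by (simp only: mult_less_cancel_right_pos of_nat_less_iff)
    then show ?thesis
      by arith
  qed
  have at: "t + real k * h = tau \<omega> \<longleftrightarrow> m \<le> n \<and> k = n - m" for k
  proof -
    have "t + real k * h = tau \<omega> \<longleftrightarrow> m + k = n"
      unfolding time n using h_pos by (simp only: mult_cancel_right of_nat_eq_iff) simp
    then show ?thesis
      by arith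
  qed
  have "(\<Sum>k<K. gain ^ k * source (t + real k * h) \<omega>) \<le> gain ^ (n - m) * (real (n - m) * (h * b) + d)"
  proof (rule sum_geometric_weights_le)
    show "source (t + real k * h) \<omega> \<le> gain * (h * b)" if "k < n - m" for k
      using that f_le[of k] before[of k] at[of k] gain_ge_1 h_pos
      by (auto simp: source_def intro: mult_left_mono)
    show "source (t + real (n - m) * h) \<omega> \<le> d"
    proof (cases "m \<le> n")
      case True
      then have "t + real (n - m) * h = tau \<omega>"
        using at by blast
      with Y_le[OF this] show ?thesis
        by (simp add: source_def)
    next
      case False
      then show ?thesis
        using before[of "n - m"] at[of "n - m"] \<open>0 \<le> d\<close> by (auto simp: source_def)
    qed
    show "source (t + real k * h) \<omega> = 0" if "n - m < k" for k
      using that before[of k] at[of k] by (auto simp: source_def)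
  qed (use gain_ge_1 h_pos \<open>0 \<le> b\<close> source_nonneg in auto)
  also have "\<dots> \<le> gain ^ n * (real n * (h * b) + d)"
    using gain_ge_1 h_pos \<open>0 \<le> b\<close> \<open>0 \<le> d\<close>
    by (intro mult_mono power_increasing add_mono mult_right_mono) auto
  also have "\<dots> = gain ^ n * (tau \<omega> * b + d)"
    by (simp add: n algebra_simps)
  also have "\<dots> \<le> exp (7/6 * Lf * tau \<omega>) * (tau \<omega> * b + d)"
    using gain_power_le_exp[of n] \<open>0 \<le> b\<close> \<open>0 \<le> d\<close> h_pos by (intro mult_right_mono) (auto simp: n)
  finally show ?thesis .
qed

lemma source_sum_le:
  assumes Bf: "\<And>\<omega>. 0 \<le> Bf \<omega>" "\<forall>t\<in>grid h. AE \<omega> in M. t < tau \<omega> \<longrightarrow> \<bar>f t \<omega> 0\<bar> \<le> Bf \<omega>"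
    and Bx: "\<And>\<omega>. 0 \<le> Bx \<omega>" "AE \<omega> in M. \<bar>xi \<omega>\<bar> \<le> Bx \<omega>"
    and t: "t \<in> grid h"
  shows "AE \<omega> in M. \<forall>K. (\<Sum>k<K. gain ^ k * source (t + real k * h) \<omega>)
    \<le> exp (7/6 * Lf * tau \<omega>) * (tau \<omega> * Bf \<omega> + Bx \<omega>)"
proof -
  obtain m :: nat where m: "t = real m * h"
    using t grid_iff by blast
  have "AE \<omega> in M. \<forall>k. t + real k * h < tau \<omega> \<longrightarrow> \<bar>f (t + real k * h) \<omega> 0\<bar> \<le> Bf \<omega>"
    unfolding AE_all_countable using Bf(2) grid_add[OF t] by blast
  moreover have "AE \<omega> in M. \<forall>k. t + real k * h = tau \<omega> \<longrightarrow> Y (t + real k * h) \<omega> = xi \<omega>"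
    unfolding AE_all_countable
  proof
    fix k
    show "AE \<omega> in M. t + real k * h = tau \<omega> \<longrightarrow> Y (t + real k * h) \<omega> = xi \<omega>"
      using Y_recursion[OF grid_add[OF t, of k]] by eventually_elim (auto simp: indicator_def)
  qed
  ultimately show ?thesis
    using Bx(2) AE_space
  proof eventually_elim
    case (elim \<omega>)
    obtain n :: nat where n: "tau \<omega> = real n * h"
      using tau_grid elim(4) grid_iff by blast
    show ?case
      using elim(1-3) Bf(1) Bx(1) by (intro allI source_sum_le_pointwise[OF m n]) auto
  qed
qed

lemma integral_abs_Y_le:
  "(\<integral>\<omega>. \<bar>Y (real n * h) \<omega>\<bar> \<partial>M)
    \<le> sqrt (\<integral>\<omega>. (indicator {\<omega>. real n * h \<le> tau \<omega>} \<omega> * Y (real n * h) \<omega>)\<^sup>2 \<partial>M)"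
proof -
  have n_grid: "real n * h \<in> grid h"
    by (auto simp: grid_iff)
  note Y_measurable[OF n_grid, measurable]
  define V where "V \<omega> = indicator {\<omega>. real n * h \<le> tau \<omega>} \<omega> * Y (real n * h) \<omega>" for \<omega>
  have V_meas [measurable]: "V \<in> borel_measurable M"
    unfolding V_def by measurable
  have "(\<integral>\<omega>. \<bar>Y (real n * h) \<omega>\<bar> \<partial>M) = (\<integral>\<omega>. \<bar>V \<omega>\<bar> \<partial>M)"
  proof (rule integral_cong_AE)
    show "AE \<omega> in M. \<bar>Y (real n * h) \<omega>\<bar> = \<bar>V \<omega>\<bar>"
      using Y_after_tau[OF n_grid] by eventually_elim (auto simp: V_def indicator_def)
  qed measurable
  also have "\<dots> \<le> sqrt (\<integral>\<omega>. (V \<omega>)\<^sup>2 \<partial>M)"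
  proof (rule integral_abs_le_sqrt_integral_square[OF V_meas])
    show "integrable M (\<lambda>\<omega>. (V \<omega>)\<^sup>2)"
    proof (rule Bochner_Integration.integrable_bound[OF Y_square_integrable[OF n_grid]])
      show "AE \<omega> in M. norm ((V \<omega>)\<^sup>2) \<le> norm ((Y (real n * h) \<omega>)\<^sup>2)"
        by (intro AE_I2) (simp add: V_def indicator_def)
    qed measurable
  qed
  finally show ?thesis
    unfolding V_def .
qed

lemma gain_power_le_weight:
  assumes "K \<le> n"
  shows "gain ^ K \<le> (1 - 3 * Lf * h) powr (- real n)"
proof -
  have q: "0 < 1 - 3 * Lf * h" "1 - 3 * Lf * h \<le> 1 - Lf * h"
    using Lf_pos h_pos Lf_h by auto
  have "gain ^ K \<le> (1 / (1 - 3 * Lf * h)) ^ K"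
    using q gain_ge_1 by (intro power_mono) (auto simp: gain_def intro: divide_left_mono)
  also have "\<dots> \<le> (1 / (1 - 3 * Lf * h)) ^ n"
    using q Lf_pos h_pos assms by (intro power_increasing) auto
  also have "\<dots> = (1 - 3 * Lf * h) powr (- real n)"
    using q by (simp add: powr_minus_divide powr_realpow power_one_over)
  finally show ?thesis .
qed

text \<open>The tail of the iteration vanishes by the weighted summability in \<^const>\<open>disc_fixpoint\<close>:
  the weight \<open>1 / (1 - 3 Lf h)\<close> dominates \<^const>\<open>gain\<close>.\<close>
lemma gain_power_integral_abs_Y_tendsto_0:
  assumes t: "t \<in> grid h"
  shows "(\<lambda>K. gain ^ K * (\<integral>\<omega>. \<bar>Y (t + real K * h) \<omega>\<bar> \<partial>M)) \<longlonglongrightarrow> 0"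
proof -
  obtain m :: nat where m: "t = real m * h"
    using t grid_iff by blast
  define T where "T n = (1 - 3 * Lf * h) powr (- real n) *
    sqrt (\<integral>\<omega>. (indicator {\<omega>. real n * h \<le> tau \<omega>} \<omega> * Y (real n * h) \<omega>)\<^sup>2 \<partial>M)" for n :: nat
  have T_lim: "(\<lambda>K. T (K + m)) \<longlonglongrightarrow> 0"
    using LIMSEQ_ignore_initial_segment[OF summable_LIMSEQ_zero[OF Y_weighted_summable]]
    unfolding T_def .
  have lower: "0 \<le> gain ^ K * (\<integral>\<omega>. \<bar>Y (t + real K * h) \<omega>\<bar> \<partial>M)" for K
    using gain_ge_1 by simp
  have upper: "gain ^ K * (\<integral>\<omega>. \<bar>Y (t + real K * h) \<omega>\<bar> \<partial>M) \<le> T (K + m)" for K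
  proof -
    have "t + real K * h = real (K + m) * h"
      by (simp add: m algebra_simps)
    then show ?thesis
      unfolding T_def using gain_power_le_weight[of K "K + m"] integral_abs_Y_le[of "K + m"]
      by (auto intro!: mult_mono)
  qed
  show ?thesis
    by (rule real_tendsto_sandwich[OF always_eventually always_eventually tendsto_const T_lim])
      (use lower upper in blast)+
qed

lemma abs_Y_le_real_cond_exp_plus_tail:
  assumes Bf: "integrable M Bf" "\<And>\<omega>. 0 \<le> Bf \<omega>" "\<forall>t\<in>grid h. AE \<omega> in M. t < tau \<omega> \<longrightarrow> \<bar>f t \<omega> 0\<bar> \<le> Bf \<omega>"
    and Bx: "\<And>\<omega>. 0 \<le> Bx \<omega>" "AE \<omega> in M. \<bar>xi \<omega>\<bar> \<le> Bx \<omega>"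
    and G: "integrable M G" "AE \<omega> in M. exp (7/6 * Lf * tau \<omega>) * (tau \<omega> * Bf \<omega> + Bx \<omega>) \<le> G \<omega>"
    and t: "t \<in> grid h"
  shows "AE \<omega> in M. \<bar>Y t \<omega>\<bar>
    \<le> real_cond_exp M (F t) G \<omega> + gain ^ K * real_cond_exp M (F t) (\<lambda>\<omega>. \<bar>Y (t + real K * h) \<omega>\<bar>) \<omega>"
proof -
  interpret S: sigma_finite_subalgebra M "F t"
    by (rule sigma_finite_subalgebra_F)
  have source_int: "\<forall>s\<in>grid h. integrable M (source s)"
    using source_integrable[OF Bf(1,3)] by blast
  then have source_k: "integrable M (source (t + real k * h))" for k
    using grid_add[OF t] by blast
  have sum_int: "integrable M (\<lambda>\<omega>. \<Sum>k<K. gain ^ k * source (t + real k * h) \<omega>)"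
    using source_k by auto
  have "AE \<omega> in M. real_cond_exp M (F t) (\<lambda>\<omega>. \<Sum>k<K. gain ^ k * source (t + real k * h) \<omega>) \<omega>
      = (\<Sum>k<K. real_cond_exp M (F t) (\<lambda>\<omega>. gain ^ k * source (t + real k * h) \<omega>) \<omega>)"
    using source_k by (intro S.real_cond_exp_sum) auto
  moreover have "AE \<omega> in M. \<forall>k. real_cond_exp M (F t) (\<lambda>\<omega>. gain ^ k * source (t + real k * h) \<omega>) \<omega>
      = gain ^ k * real_cond_exp M (F t) (source (t + real k * h)) \<omega>"
    unfolding AE_all_countable using source_k by (intro allI S.real_cond_exp_cmult)
  moreover have "AE \<omega> in M. (\<Sum>k<K. gain ^ k * source (t + real k * h) \<omega>) \<le> G \<omega>"
    using source_sum_le[OF Bf(2,3) Bx t] G(2) by eventually_elim (meson order.trans)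
  then have "AE \<omega> in M. real_cond_exp M (F t) (\<lambda>\<omega>. \<Sum>k<K. gain ^ k * source (t + real k * h) \<omega>) \<omega>
      \<le> real_cond_exp M (F t) G \<omega>"
    by (rule S.real_cond_exp_mono[OF _ sum_int G(1)])
  ultimately show ?thesis
    using abs_Y_iterated[OF source_int t, of K]
  proof eventually_elim
    case (elim \<omega>)
    then have "(\<Sum>k<K. gain ^ k * real_cond_exp M (F t) (source (t + real k * h)) \<omega>)
        \<le> real_cond_exp M (F t) G \<omega>"
      by simp
    with elim(4) show ?case
      by linarith
  qed
qed

theorem abs_Y_le_real_cond_exp:
  assumes Bf: "integrable M Bf" "\<And>\<omega>. 0 \<le> Bf \<omega>" "\<forall>t\<in>grid h. AE \<omega> in M. t < tau \<omega> \<longrightarrow> \<bar>f t \<omega> 0\<bar> \<le> Bf \<omega>"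
    and Bx: "\<And>\<omega>. 0 \<le> Bx \<omega>" "AE \<omega> in M. \<bar>xi \<omega>\<bar> \<le> Bx \<omega>"
    and G: "integrable M G" "AE \<omega> in M. exp (7/6 * Lf * tau \<omega>) * (tau \<omega> * Bf \<omega> + Bx \<omega>) \<le> G \<omega>"
    and t: "t \<in> grid h"
  shows "AE \<omega> in M. \<bar>Y t \<omega>\<bar> \<le> real_cond_exp M (F t) G \<omega>"
proof -
  interpret S: sigma_finite_subalgebra M "F t"
    by (rule sigma_finite_subalgebra_F)
  let ?Y = "\<lambda>K \<omega>. \<bar>Y (t + real K * h) \<omega>\<bar>"
  let ?g = "\<lambda>K \<omega>. gain ^ K * real_cond_exp M (F t) (?Y K) \<omega>"
  have Y_K_int: "integrable M (?Y K)" for K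
    using Y_integrable[OF grid_add[OF t]] by auto
  have g_nonneg: "AE \<omega> in M. 0 \<le> ?g K \<omega>" for K
  proof -
    have "AE \<omega> in M. 0 \<le> real_cond_exp M (F t) (?Y K) \<omega>"
      using Y_K_int by (intro S.real_cond_exp_pos) auto
    then show ?thesis
      by eventually_elim (use gain_ge_1 in simp)
  qed
  have "(\<lambda>K. \<integral>\<omega>. ?g K \<omega> \<partial>M) = (\<lambda>K. gain ^ K * (\<integral>\<omega>. ?Y K \<omega> \<partial>M))"
    using S.real_cond_exp_int(2)[OF Y_K_int] by (intro ext) simp
  then have g_tendsto: "(\<lambda>K. \<integral>\<omega>. ?g K \<omega> \<partial>M) \<longlonglongrightarrow> 0"
    using gain_power_integral_abs_Y_tendsto_0[OF t] by (simp only:)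
  have g_int: "integrable M (?g K)" for K
    using S.real_cond_exp_int(1)[OF Y_K_int] by simp
  have "integrable M (\<lambda>\<omega>. \<bar>Y t \<omega>\<bar>)"
    using Y_integrable[OF t] by simp
  from AE_le_if_integral_gap_tendsto_0[OF this S.real_cond_exp_int(1)[OF G(1)] g_int
      abs_Y_le_real_cond_exp_plus_tail[OF Bf Bx G t] g_nonneg g_tendsto]
  show ?thesis .
qed

end

section \<open>A dominator uniform in the step size\<close>

lemma one_plus_powr_mult_le:
  fixes R X Z \<alpha> \<beta> \<gamma> C s :: real
  assumes "0 \<le> R" "0 \<le> X" "0 \<le> Z" "0 \<le> \<alpha>" "0 \<le> \<beta>" "0 \<le> \<gamma>" "0 \<le> C" "0 \<le> s"
    and "(\<alpha> + \<beta>) * s \<le> 1" "(\<alpha> + \<gamma>) * s \<le> 1"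
  shows "(1 + R powr \<alpha> * (X powr \<beta> + C * Z powr \<gamma>)) powr s
    \<le> 2 powr s * (1 + 2 powr s * ((R + X + 1) + C powr s * (R + Z + 1)))"
proof -
  have "(X powr \<beta> + C * Z powr \<gamma>) powr s \<le> 2 powr s * (X powr (\<beta> * s) + C powr s * Z powr (\<gamma> * s))"
    using powr_add_le_two_powr[of "X powr \<beta>" "C * Z powr \<gamma>" s] assms by (simp add: powr_mult powr_powr)
  then have "(R powr \<alpha> * (X powr \<beta> + C * Z powr \<gamma>)) powr s
      \<le> R powr (\<alpha> * s) * (2 powr s * (X powr (\<beta> * s) + C powr s * Z powr (\<gamma> * s)))"
    using assms by (simp add: powr_mult powr_powr mult_left_mono)
  also have "\<dots> = 2 powr s *
      (R powr (\<alpha> * s) * X powr (\<beta> * s) + C powr s * (R powr (\<alpha> * s) * Z powr (\<gamma> * s)))"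
    by (simp add: algebra_simps)
  also have "\<dots> \<le> 2 powr s * ((R + X + 1) + C powr s * (R + Z + 1))"
    using assms by (intro mult_left_mono add_mono powr_mult_powr_le_add) (auto simp: algebra_simps)
  finally have "(R powr \<alpha> * (X powr \<beta> + C * Z powr \<gamma>)) powr s
      \<le> 2 powr s * ((R + X + 1) + C powr s * (R + Z + 1))" .
  moreover have "(1 + R powr \<alpha> * (X powr \<beta> + C * Z powr \<gamma>)) powr s
      \<le> 2 powr s * (1 + (R powr \<alpha> * (X powr \<beta> + C * Z powr \<gamma>)) powr s)"
    using powr_add_le_two_powr[of 1 "R powr \<alpha> * (X powr \<beta> + C * Z powr \<gamma>)" s] assms by simp
  ultimately show ?thesis
    by (smt (verit) mult_left_mono powr_ge_zero)
qed

lemma integrable_of_integrable_powr: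
  fixes f :: "'a \<Rightarrow> real"
  assumes "f \<in> borel_measurable M" "\<And>x. 1 \<le> f x" "1 \<le> s" "integrable M (\<lambda>x. f x powr s)"
  shows "integrable M f"
proof (rule Bochner_Integration.integrable_bound[OF assms(4) assms(1)])
  show "AE x in M. norm (f x) \<le> norm (f x powr s)"
    using assms(2,3) powr_mono[of 1 s] by (intro AE_I2) (simp add: order.trans[OF zero_le_one])
qed

text \<open>A majorant, uniform in the step size, of \<open>exp (7/6 Lf tau) (tau sup |f(., 0)| + |xi|)\<close>,
  built from the integrable bounds \<open>Zr\<close>, \<open>Zf\<close>, \<open>Zx\<close> of (R-q), (pi-F) and (pi-T); the summand \<open>1\<close>
  keeps it positive for Jensen's inequality.\<close>
definition disc_dominator ::
  "real \<Rightarrow> real \<Rightarrow> real \<Rightarrow> real \<Rightarrow> ('a \<Rightarrow> real) \<Rightarrow> ('a \<Rightarrow> real) \<Rightarrow> ('a \<Rightarrow> real) \<Rightarrow> 'a \<Rightarrow> real" where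
  "disc_dominator Lf \<rho> p q Zr Zf Zx \<omega> =
    1 + \<bar>Zr \<omega>\<bar> powr (3 * Lf / (2 * \<rho>)) * (\<bar>Zx \<omega>\<bar> powr (1 / (2 * q)) + 3 / Lf * \<bar>Zf \<omega>\<bar> powr (1 / p))"

lemma disc_dominator_ge_1: "0 < Lf \<Longrightarrow> 1 \<le> disc_dominator Lf \<rho> p q Zr Zf Zx \<omega>"
  by (simp add: disc_dominator_def)

lemma disc_dominator_measurable [measurable]:
  assumes [measurable]: "Zr \<in> borel_measurable M" "Zf \<in> borel_measurable M" "Zx \<in> borel_measurable M"
  shows "disc_dominator Lf \<rho> p q Zr Zf Zx \<in> borel_measurable M"
  unfolding disc_dominator_def[abs_def] by measurable

text \<open>The exponent \<open>8 q / 7 > q\<close> is admissible: \<open>\<rho> > 4 q Lf\<close> and \<open>p > 2 q\<close> keep the exponents in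
  Young's inequality \<open>powr_mult_powr_le_add\<close> summing to at most \<open>1\<close>.\<close>
lemma (in finite_measure) integrable_disc_dominator_powr:
  assumes Z: "integrable M Zr" "integrable M Zf" "integrable M Zx"
    and "0 < Lf" "0 < q" "4 * q * Lf < \<rho>" "2 * q < p"
  shows "integrable M (\<lambda>\<omega>. disc_dominator Lf \<rho> p q Zr Zf Zx \<omega> powr (8 * q / 7))"
proof (rule Bochner_Integration.integrable_bound)
  define s where "s = 8 * q / 7"
  define B where "B \<omega> = 2 powr s *
    (1 + 2 powr s * ((\<bar>Zr \<omega>\<bar> + \<bar>Zx \<omega>\<bar> + 1) + (3 / Lf) powr s * (\<bar>Zr \<omega>\<bar> + \<bar>Zf \<omega>\<bar> + 1)))" for \<omega>
  show "integrable M B"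
    unfolding B_def using Z
    by (intro Bochner_Integration.integrable_add Bochner_Integration.integrable_mult_right integrable_abs
        integrable_const)
  have \<rho>: "0 < \<rho>"
    using assms by (smt (verit) mult_pos_pos)
  have exps: "(3 * Lf / (2 * \<rho>) + 1 / (2 * q)) * s \<le> 1" "(3 * Lf / (2 * \<rho>) + 1 / p) * s \<le> 1"
  proof -
    have "3 * Lf / (2 * \<rho>) * s \<le> 3 / 7"
      using assms \<rho> by (simp add: s_def field_simps)
    moreover have "1 / (2 * q) * s = 4 / 7"
      using assms by (simp add: s_def)
    moreover have "1 / p * s \<le> 1 / (2 * q) * s"
      using assms by (intro mult_right_mono divide_left_mono) (auto simp: s_def)
    ultimately show "(3 * Lf / (2 * \<rho>) + 1 / (2 * q)) * s \<le> 1" "(3 * Lf / (2 * \<rho>) + 1 / p) * s \<le> 1"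
      unfolding distrib_right by linarith+
  qed
  have "disc_dominator Lf \<rho> p q Zr Zf Zx \<omega> powr s \<le> B \<omega>" for \<omega>
    unfolding disc_dominator_def B_def using assms \<rho> exps
    by (intro one_plus_powr_mult_le) (auto simp: s_def)
  then show "AE \<omega> in M. norm (disc_dominator Lf \<rho> p q Zr Zf Zx \<omega> powr (8 * q / 7)) \<le> norm (B \<omega>)"
    by (intro AE_I2) (simp add: s_def, meson abs_ge_self order.trans)
qed (use Z in measurable)

lemma (in filtered_prob_space) real_cond_exp_powr_dominated_by_integrable_powr:
  fixes G :: "'a \<Rightarrow> real"
  assumes G: "integrable M G" "\<And>\<omega>. 0 < G \<omega>" "integrable M (\<lambda>\<omega>. G \<omega> powr s)"
    and "1 \<le> s" "0 < q" "q < s"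
  shows "\<exists>Z. integrable M Z \<and> (\<forall>t. AE \<omega> in M. real_cond_exp M (F t) G \<omega> powr q \<le> Z \<omega>)"
proof -
  obtain Z where Z: "integrable M Z"
    "\<forall>t. AE \<omega> in M. real_cond_exp M (F t) (\<lambda>\<omega>. G \<omega> powr s) \<omega> powr (q / s) \<le> Z \<omega>"
    using real_cond_exp_powr_dominated[OF G(3) _, of "q / s"] assms by auto
  have G_pos: "AE \<omega> in M. 0 < G \<omega>"
    using G(2) by simp
  have "AE \<omega> in M. real_cond_exp M (F t) G \<omega> powr q \<le> Z \<omega>" for t
    using sigma_finite_subalgebra.real_cond_exp_powr_le[OF sigma_finite_subalgebra_F[of t] G(1) G_pos G(3)
        assms(4)] Z(2)[rule_format, of t]
  proof eventually_elim
    case (elim \<omega>)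
    have "real_cond_exp M (F t) G \<omega> powr q = (real_cond_exp M (F t) G \<omega> powr s) powr (q / s)"
      using assms by (simp add: powr_powr)
    also have "\<dots> \<le> real_cond_exp M (F t) (\<lambda>\<omega>. G \<omega> powr s) \<omega> powr (q / s)"
      using elim assms by (intro powr_mono2) auto
    finally show ?case
      using elim by linarith
  qed
  with Z(1) show ?thesis
    by blast
qed

lemma (in filtered_prob_space) real_cond_exp_disc_dominator_powr_dominated:
  assumes Z: "integrable M Zr" "integrable M Zf" "integrable M Zx"
    and "0 < Lf" "1 \<le> q" "4 * q * Lf < \<rho>" "2 * q < p"
  shows "integrable M (disc_dominator Lf \<rho> p q Zr Zf Zx)"
    and "\<exists>Z. integrable M Z \<and>
      (\<forall>t. AE \<omega> in M. real_cond_exp M (F t) (disc_dominator Lf \<rho> p q Zr Zf Zx) \<omega> powr q \<le> Z \<omega>)"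
proof -
  have s: "1 \<le> 8 * q / 7" "0 < q" "q < 8 * q / 7"
    using assms by auto
  have G_ge_1: "1 \<le> disc_dominator Lf \<rho> p q Zr Zf Zx \<omega>" for \<omega>
    using assms by (simp add: disc_dominator_ge_1)
  have G_powr_int: "integrable M (\<lambda>\<omega>. disc_dominator Lf \<rho> p q Zr Zf Zx \<omega> powr (8 * q / 7))"
    using assms s by (intro integrable_disc_dominator_powr) auto
  have "disc_dominator Lf \<rho> p q Zr Zf Zx \<in> borel_measurable M"
    using Z by (intro disc_dominator_measurable) auto
  from integrable_of_integrable_powr[OF this G_ge_1 s(1) G_powr_int]
  show G_int: "integrable M (disc_dominator Lf \<rho> p q Zr Zf Zx)" .
  have "0 < disc_dominator Lf \<rho> p q Zr Zf Zx \<omega>" for \<omega>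
    using G_ge_1[of \<omega>] by linarith
  from real_cond_exp_powr_dominated_by_integrable_powr[OF G_int this G_powr_int s]
  show "\<exists>Z. integrable M Z \<and>
      (\<forall>t. AE \<omega> in M. real_cond_exp M (F t) (disc_dominator Lf \<rho> p q Zr Zf Zx) \<omega> powr q \<le> Z \<omega>)" .
qed

context disc_scheme
begin

lemma abs_Y_le_real_cond_exp_disc_dominator:
  assumes "integrable M Zf" "integrable M (disc_dominator Lf \<rho> p q Zr Zf Zx)" "0 < \<rho>" "1 \<le> p" "0 < q"
    and tau_Zr: "AE \<omega> in M. exp (\<rho> * tau \<omega>) \<le> Zr \<omega>"
    and f_Zf: "\<forall>t\<in>grid h. AE \<omega> in M. t < tau \<omega> \<longrightarrow> \<bar>f t \<omega> 0\<bar> powr p \<le> Zf \<omega>"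
    and xi_Zx: "AE \<omega> in M. \<bar>xi \<omega>\<bar> powr (2 * q) \<le> Zx \<omega>"
    and t: "t \<in> grid h"
  shows "AE \<omega> in M. \<bar>Y t \<omega>\<bar> \<le> real_cond_exp M (F t) (disc_dominator Lf \<rho> p q Zr Zf Zx) \<omega>"
proof (rule abs_Y_le_real_cond_exp)
  have [measurable]: "Zf \<in> borel_measurable M"
    using assms(1) by auto
  define Bf where "Bf \<omega> = \<bar>Zf \<omega>\<bar> powr (1 / p)" for \<omega>
  define Bx where "Bx \<omega> = \<bar>Zx \<omega>\<bar> powr (1 / (2 * q))" for \<omega>
  show "0 \<le> Bf \<omega>" "0 \<le> Bx \<omega>" for \<omega>
    by (simp_all add: Bf_def Bx_def)
  show "integrable M Bf"
  proof (rule Bochner_Integration.integrable_bound)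
    show "integrable M (\<lambda>\<omega>. 1 + \<bar>Zf \<omega>\<bar>)"
      using assms(1) by simp
    show "AE \<omega> in M. norm (Bf \<omega>) \<le> norm (1 + \<bar>Zf \<omega>\<bar>)"
      using assms(4) by (intro AE_I2) (simp add: Bf_def powr_le_one_plus)
  qed (unfold Bf_def, measurable)
  show "\<forall>t\<in>grid h. AE \<omega> in M. t < tau \<omega> \<longrightarrow> \<bar>f t \<omega> 0\<bar> \<le> Bf \<omega>"
  proof
    fix s assume "s \<in> grid h"
    with f_Zf show "AE \<omega> in M. s < tau \<omega> \<longrightarrow> \<bar>f s \<omega> 0\<bar> \<le> Bf \<omega>"
      using assms(4) by (auto simp: Bf_def intro!: le_powr_inverse elim!: eventually_mono)
  qed
  show "AE \<omega> in M. \<bar>xi \<omega>\<bar> \<le> Bx \<omega>"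
    using xi_Zx by eventually_elim (use assms(5) in \<open>auto simp: Bx_def intro!: le_powr_inverse\<close>)
  show "AE \<omega> in M. exp (7/6 * Lf * tau \<omega>) * (tau \<omega> * Bf \<omega> + Bx \<omega>) \<le> disc_dominator Lf \<rho> p q Zr Zf Zx \<omega>"
    using tau_Zr AE_space
  proof eventually_elim
    case (elim \<omega>)
    have "0 \<le> tau \<omega>"
      using grid_nonneg[OF less_imp_le[OF h_pos]] tau_grid elim(2) by blast
    then have "exp (7/6 * Lf * tau \<omega>) * (tau \<omega> * Bf \<omega> + Bx \<omega>)
        \<le> \<bar>Zr \<omega>\<bar> powr (3 * Lf / (2 * \<rho>)) * (Bx \<omega> + 3 / Lf * Bf \<omega>)"
      using elim Lf_pos assms(3) by (intro exp_weight_le_powr) (auto simp: Bf_def Bx_def)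
    then show ?case
      by (simp add: disc_dominator_def Bf_def Bx_def)
  qed
qed (use assms(2) t in auto)

end

lemma disc_schemeI:
  assumes "filtered_prob_space M F" "0 < Lf" "h \<in> {0<..h0}" "h0 < 1 / (12 * Lf)"
    and "stopping_time F tau" "\<forall>\<omega>\<in>space M. tau \<omega> \<in> grid h"
    and "\<forall>t\<in>grid h. \<forall>\<omega> x y. \<bar>f t \<omega> x - f t \<omega> y\<bar> \<le> Lf * \<bar>x - y\<bar>"
    and "\<forall>t\<in>grid h. \<forall>A. A \<in> borel_measurable (F t) \<longrightarrow> (\<lambda>\<omega>. f t \<omega> (A \<omega>)) \<in> borel_measurable (F t)"
    and "disc_fixpoint M F Lf h tau xi f Y"
  shows "disc_scheme M F Lf h tau xi f Y"
proof -
  have "Lf * h \<le> Lf * h0"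
    using assms(2,3) by (intro mult_left_mono) auto
  also have "\<dots> \<le> 1/12"
    using assms(2,4) by (auto simp: field_simps)
  finally show ?thesis
    using assms by (simp add: disc_scheme_def disc_scheme_axioms_def)
qed

lemma abs_disc_approx_powr_le:
  fixes q e z zx :: real
  assumes "0 < q" "t < tauh \<omega> \<Longrightarrow> \<bar>Ys t \<omega>\<bar> \<le> e" "e powr q \<le> z" "\<bar>xi \<omega>\<bar> powr (2 * q) \<le> zx"
  shows "\<bar>disc_approx tauh xi Ys t \<omega>\<bar> powr q \<le> 1 + \<bar>zx\<bar> + z"
proof (cases "t < tauh \<omega>")
  case True
  then have "\<bar>disc_approx tauh xi Ys t \<omega>\<bar> powr q \<le> e powr q"
    using assms by (intro powr_mono2) (auto simp: disc_approx_def)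
  then show ?thesis
    using assms(3) by simp
next
  case False
  then have "disc_approx tauh xi Ys t \<omega> = xi \<omega>"
    by (simp add: disc_approx_def)
  moreover have "\<bar>xi \<omega>\<bar> powr q = (\<bar>xi \<omega>\<bar> powr (2 * q)) powr (1 / 2)"
    by (simp add: powr_powr)
  moreover have "\<dots> \<le> 1 + \<bar>xi \<omega>\<bar> powr (2 * q)"
    by (rule powr_le_one_plus) auto
  ultimately have "\<bar>disc_approx tauh xi Ys t \<omega>\<bar> powr q \<le> 1 + \<bar>xi \<omega>\<bar> powr (2 * q)"
    by simp
  then show ?thesis
    using assms(3,4) powr_ge_zero[of e q] abs_ge_self[of zx] by linarith
qed

theorem mainTheorem15:
  fixes M :: "'a measure" and W :: "real \<Rightarrow> 'a \<Rightarrow> real ^ ('d::finite)"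
    and tau :: "'a \<Rightarrow> real" and Lf h0 q p :: real
    and tauh :: "real \<Rightarrow> 'a \<Rightarrow> real" and xi :: "real \<Rightarrow> 'a \<Rightarrow> real"
    and f :: "real \<Rightarrow> real \<Rightarrow> 'a \<Rightarrow> real \<Rightarrow> real"
    and Ys :: "real \<Rightarrow> real \<Rightarrow> 'a \<Rightarrow> real"
  defines "F \<equiv> bm_filtration M W"
  assumes prob: "prob_space M"
    and bm: "brownian_motion M W"
    and tau_st: "stopping_time F tau" and tau_nonneg: "\<forall>\<omega>\<in>space M. tau \<omega> \<ge> 0"
    and Lf_pos: "Lf > 0"
    and q: "q \<ge> 4"
    \<comment> \<open>(h)\<close>
    and h0: "0 < h0" "h0 < min Lf (1 / (12 * Lf))"
    \<comment> \<open>tau_h: finite pi_h-valued stopping times\<close>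
    and tauh_st: "\<forall>h\<in>{0<..h0}. stopping_time F (tauh h)"
    and tauh_grid: "\<forall>h\<in>{0<..h0}. \<forall>\<omega>\<in>space M. tauh h \<omega> \<in> grid h"
    \<comment> \<open>(R-q)\<close>
    and Rq: "\<exists>\<rho>>4 * q * Lf. integrable M (\<lambda>\<omega>. exp (\<rho> * tau \<omega>)) \<and>
               (\<exists>Z. integrable M Z \<and>
                  (\<forall>h\<in>{0<..h0}. AE \<omega> in M. exp (\<rho> * tauh h \<omega>) \<le> Z \<omega>))"
    \<comment> \<open>(pi-F) with p > 2q\<close>
    and p: "p > 2 * q"
    and f_lip: "\<forall>h\<in>{0<..h0}. \<forall>t\<in>grid h. \<forall>\<omega> x y. \<bar>f h t \<omega> x - f h t \<omega> y\<bar> \<le> Lf * \<bar>x - y\<bar>"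
    and f_meas: "\<forall>h\<in>{0<..h0}. \<forall>t\<in>grid h. \<forall>A. A \<in> borel_measurable (F t) \<longrightarrow>
                   (\<lambda>\<omega>. f h t \<omega> (A \<omega>)) \<in> borel_measurable (F t)"
    and f_int: "\<exists>Z. integrable M Z \<and> (\<forall>h\<in>{0<..h0}. \<forall>t\<in>grid h.
                   AE \<omega> in M. t \<le> max (tau \<omega>) (tauh h \<omega>) \<longrightarrow> \<bar>f h t \<omega> 0\<bar> powr p \<le> Z \<omega>)"
    \<comment> \<open>(pi-T) with p = 2q\<close>
    and xi_meas: "\<forall>h\<in>{0<..h0}. xi h \<in> borel_measurable (filtration.pre_sigma (space M) F (tauh h))"
    and xi_int: "\<exists>Z. integrable M Z \<and>
                   (\<forall>h\<in>{0<..h0}. AE \<omega> in M. \<bar>xi h \<omega>\<bar> powr (2 * q) \<le> Z \<omega>)"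
    \<comment> \<open>Ys h is the fixed point of T defining the discrete approximation\<close>
    and fixp: "\<forall>h\<in>{0<..h0}. disc_fixpoint M F Lf h (tauh h) (xi h) (f h) (Ys h)"
  shows "\<exists>Z. integrable M Z \<and>
           (\<forall>h\<in>{0<..h0}. \<forall>t\<in>grid h.
              AE \<omega> in M. \<bar>disc_approx (tauh h) (xi h) (Ys h) t \<omega>\<bar> powr q \<le> Z \<omega>)"
proof -
  have filtered: "filtered_prob_space M F"
    unfolding F_def by (rule filtered_prob_space_bm_filtration[OF prob bm])
  interpret filtered_prob_space M F
    by (rule filtered)
  obtain \<rho> Zr where \<rho>: "4 * q * Lf < \<rho>" and Zr: "integrable M Zr"
    "\<forall>h\<in>{0<..h0}. AE \<omega> in M. exp (\<rho> * tauh h \<omega>) \<le> Zr \<omega>"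
    using Rq by blast
  obtain Zf where Zf: "integrable M Zf" "\<forall>h\<in>{0<..h0}. \<forall>t\<in>grid h.
      AE \<omega> in M. t \<le> max (tau \<omega>) (tauh h \<omega>) \<longrightarrow> \<bar>f h t \<omega> 0\<bar> powr p \<le> Zf \<omega>"
    using f_int by blast
  obtain Zx where Zx: "integrable M Zx" "\<forall>h\<in>{0<..h0}. AE \<omega> in M. \<bar>xi h \<omega>\<bar> powr (2 * q) \<le> Zx \<omega>"
    using xi_int by blast
  have params: "1 \<le> q" "0 < q" "0 < \<rho>" "1 \<le> p"
    using q p \<rho> Lf_pos mult_pos_pos[of "4 * q" Lf] by linarith+
  define G where "G = disc_dominator Lf \<rho> p q Zr Zf Zx"
  note G = real_cond_exp_disc_dominator_powr_dominated[OF Zr(1) Zf(1) Zx(1) Lf_pos params(1) \<rho> p,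
      folded G_def]
  obtain Zd where Zd: "integrable M Zd" "\<forall>t. AE \<omega> in M. real_cond_exp M (F t) G \<omega> powr q \<le> Zd \<omega>"
    using G(2) by blast
  have Ys_le: "AE \<omega> in M. \<bar>Ys h t \<omega>\<bar> \<le> real_cond_exp M (F t) G \<omega>"
    if h: "h \<in> {0<..h0}" and t: "t \<in> grid h" for h t
  proof -
    interpret disc_scheme M F Lf h "tauh h" "xi h" "f h" "Ys h"
      using filtered Lf_pos h h0(2) tauh_st tauh_grid f_lip f_meas fixp by (intro disc_schemeI) auto
    have "\<forall>s\<in>grid h. AE \<omega> in M. s < tauh h \<omega> \<longrightarrow> \<bar>f h s \<omega> 0\<bar> powr p \<le> Zf \<omega>"
      using Zf(2) h by (auto elim!: ballE eventually_mono)
    then show ?thesis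
      using G(1) Zf(1) Zr(2) Zx(2) h t params unfolding G_def
      by (intro abs_Y_le_real_cond_exp_disc_dominator) auto
  qed
  show ?thesis
  proof (intro exI[of _ "\<lambda>\<omega>. 1 + \<bar>Zx \<omega>\<bar> + Zd \<omega>"] conjI ballI)
    show "integrable M (\<lambda>\<omega>. 1 + \<bar>Zx \<omega>\<bar> + Zd \<omega>)"
      using Zx(1) Zd(1) by auto
    fix h t assume h: "h \<in> {0<..h0}" and t: "t \<in> grid h"
    show "AE \<omega> in M. \<bar>disc_approx (tauh h) (xi h) (Ys h) t \<omega>\<bar> powr q \<le> 1 + \<bar>Zx \<omega>\<bar> + Zd \<omega>"
      using Ys_le[OF h t] Zd(2)[rule_format, of t] bspec[OF Zx(2) h]
      by eventually_elim (rule abs_disc_approx_powr_le[OF params(2)])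
  qed
qed

end
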